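(* Let $n>0$ and let $u$ be a weak solution of $(\mathbb P)$ obtained as the limit of a subsequence of positive classical solutions $u_\epsilon$ of $(\mathbb P_\epsilon)$. Let $\Psi$ be a nonempty subset of $(\tfrac12-n,\,2-n)$. Suppose that for every $\alpha\in\Psi$ and every $T>0$ there exist constants $c_1,c_2,\delta>0$, not depending on $\epsilon$, such that for every $\gamma$ with $\frac{1+n+\alpha}{3}\le\gamma\le\frac{1+n+\alpha}{3}+\delta$, $$\int_{Q_T}u_\epsilon^{\alpha+n-2\gamma+1}\big((u_\epsilon^\gamma)_{xx}\big)^2\,dx\,dt\le c_1,\qquad \int_{Q_T}u_\epsilon^{\alpha+n-3}(u_\epsilon)_x^4\,dx\,dt\le c_2.$$ Then for almost every $t>0$, $u^{1/\beta}(\cdot,t)\in C^1([-a,a])$ for all $\beta\in\big(0,\frac{3}{n+\inf\Psi+1}\big)$.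
   Context: Notation: $\Omega=(-a,a)$, $Q_T=\Omega\times(0,T)$. Problem $(\mathbb P)$: $u_t+\big(u^n(u_{xxx}+\nu u^{m-n}u_x-Au^{M-n}u_x)\big)_x=0$ in $\Omega\times(0,\infty)$ with $\nu=\pm1$, $A\ge0$, $m<M$; $u_x(\pm a,t)=u_{xxx}(\pm a,t)=0$ whenever $u(\pm a,t)\ne0$; $u(x,0)=u_0(x)$, $u_0\in H^1(\Omega)$, $u_0\ge0$, $u_0\not\equiv0$. Weak solutions are nonnegative Hölder continuous functions in $L^\infty(0,\infty;H^1(\Omega))$ satisfying the equation in the integral sense. Regularized problem $(\mathbb P_\epsilon)$: same equation with $u^n$ replaced by $f_\epsilon(u)=|u|^{n+4}/(\epsilon|u|^n+u^4)$, boundary conditions $u_x=u_{xxx}=0$ at $x=\pm a$, smooth positive initial data $u_{0\epsilon}\ge u_0+\epsilon^\theta$ converging to $u_0$ in $H^1(\Omega)$. "Obtained as the limit of a subsequence" means $u_{\epsilon_k}\to u$ uniformly on $\overline Q_T$ for every $T$, $\epsilon_k\to0$. *)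

theory Defs
  imports "HOL-Analysis.Analysis"
begin

text \<open>Functions of (x,t) are written curried: u x t.  Omega = (-a,a).\<close>

definition f_eps :: "real \<Rightarrow> real \<Rightarrow> real \<Rightarrow> real" where
  "f_eps n \<epsilon> s = \<bar>s\<bar> powr (n + 4) / (\<epsilon> * \<bar>s\<bar> powr n + s ^ 4)"

definition C1_on_interval :: "real \<Rightarrow> real \<Rightarrow> (real \<Rightarrow> real) \<Rightarrow> bool" where
  "C1_on_interval lo hi f \<longleftrightarrow>
     (\<exists>g. continuous_on {lo..hi} g \<and>
          (\<forall>x\<in>{lo..hi}. (f has_real_derivative g x) (at x within {lo..hi})))"

definition smooth_fun :: "(real \<Rightarrow> real) \<Rightarrow> bool" where
  "smooth_fun g \<longleftrightarrow> (\<forall>k x. ((deriv ^^ k) g) differentiable (at x))"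

definition L2_on :: "real \<Rightarrow> (real \<Rightarrow> real) \<Rightarrow> bool" where
  "L2_on a v \<longleftrightarrow> set_borel_measurable lborel {-a<..<a} v \<and>
                  set_integrable lborel {-a<..<a} (\<lambda>x. (v x)\<^sup>2)"

definition weak_deriv_on :: "real \<Rightarrow> (real \<Rightarrow> real) \<Rightarrow> (real \<Rightarrow> real) \<Rightarrow> bool" where
  "weak_deriv_on a v g \<longleftrightarrow>
     set_integrable lborel {-a<..<a} v \<and> set_integrable lborel {-a<..<a} g \<and>
     (\<forall>\<phi> \<phi>'. (\<forall>x. (\<phi> has_real_derivative \<phi>' x) (at x)) \<and> continuous_on UNIV \<phi>' \<and>
               (\<exists>b<a. \<forall>x. b \<le> \<bar>x\<bar> \<longrightarrow> \<phi> x = 0) \<longrightarrow>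
        (LINT x:{-a<..<a}|lborel. v x * \<phi>' x) = - (LINT x:{-a<..<a}|lborel. g x * \<phi> x))"

definition in_H1 :: "real \<Rightarrow> (real \<Rightarrow> real) \<Rightarrow> bool" where
  "in_H1 a v \<longleftrightarrow> (\<exists>g. L2_on a v \<and> L2_on a g \<and> weak_deriv_on a v g)"

definition H1_bounded :: "real \<Rightarrow> (real \<Rightarrow> real) \<Rightarrow> real \<Rightarrow> bool" where
  "H1_bounded a v K \<longleftrightarrow> (\<exists>g. L2_on a v \<and> L2_on a g \<and> weak_deriv_on a v g \<and>
       (LINT x:{-a<..<a}|lborel. (v x)\<^sup>2 + (g x)\<^sup>2) \<le> K)"

definition H1_conv :: "real \<Rightarrow> (real \<Rightarrow> real \<Rightarrow> real) \<Rightarrow> (real \<Rightarrow> real) \<Rightarrow> bool" where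
  "H1_conv a F v \<longleftrightarrow> (\<exists>g. L2_on a v \<and> L2_on a g \<and> weak_deriv_on a v g \<and>
     ((\<lambda>\<epsilon>. LINT x:{-a<..<a}|lborel. (F \<epsilon> x - v x)\<^sup>2 + (deriv (F \<epsilon>) x - g x)\<^sup>2)
        \<longlongrightarrow> 0) (at_right 0))"

definition holder_on :: "(real \<times> real) set \<Rightarrow> (real \<times> real \<Rightarrow> real) \<Rightarrow> bool" where
  "holder_on S f \<longleftrightarrow> (\<exists>C e. 0 \<le> C \<and> 0 < e \<and> e \<le> 1 \<and>
      (\<forall>p\<in>S. \<forall>q\<in>S. \<bar>f p - f q\<bar> \<le> C * dist p q powr e))"

text \<open>Positive classical solution of (P_eps) on [-a,a] x [0,infinity) with initial datum v0:
  u in C^{4,1} on [-a,a] x (0,infinity), continuous up to t = 0, equation pointwise,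
  u_x = u_xxx = 0 at x = +-a.\<close>
definition classical_sol_eps ::
  "real \<Rightarrow> real \<Rightarrow> real \<Rightarrow> real \<Rightarrow> real \<Rightarrow> real \<Rightarrow> real \<Rightarrow> (real \<Rightarrow> real) \<Rightarrow> (real \<Rightarrow> real \<Rightarrow> real) \<Rightarrow> bool"
where
  "classical_sol_eps a n \<nu> A m M \<epsilon> v0 u \<longleftrightarrow>
     (\<forall>x\<in>{-a..a}. \<forall>t\<ge>0. u x t > 0) \<and>
     continuous_on ({-a..a} \<times> {0..}) (\<lambda>p. u (fst p) (snd p)) \<and>
     (\<forall>x\<in>{-a..a}. u x 0 = v0 x) \<and>
     (\<exists>u1 u2 u3 u4 ut.
        continuous_on ({-a..a} \<times> {0<..}) (\<lambda>p. u1 (fst p) (snd p)) \<and>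
        continuous_on ({-a..a} \<times> {0<..}) (\<lambda>p. u2 (fst p) (snd p)) \<and>
        continuous_on ({-a..a} \<times> {0<..}) (\<lambda>p. u3 (fst p) (snd p)) \<and>
        continuous_on ({-a..a} \<times> {0<..}) (\<lambda>p. u4 (fst p) (snd p)) \<and>
        continuous_on ({-a..a} \<times> {0<..}) (\<lambda>p. ut (fst p) (snd p)) \<and>
        (\<forall>x\<in>{-a..a}. \<forall>t>0.
           ((\<lambda>y. u y t) has_real_derivative u1 x t) (at x within {-a..a}) \<and>
           ((\<lambda>y. u1 y t) has_real_derivative u2 x t) (at x within {-a..a}) \<and>
           ((\<lambda>y. u2 y t) has_real_derivative u3 x t) (at x within {-a..a}) \<and>
           ((\<lambda>y. u3 y t) has_real_derivative u4 x t) (at x within {-a..a}) \<and>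
           ((\<lambda>s. u x s) has_real_derivative ut x t) (at t) \<and>
           ((\<lambda>y. f_eps n \<epsilon> (u y t) *
                  (u3 y t + \<nu> * u y t powr (m - n) * u1 y t - A * u y t powr (M - n) * u1 y t))
              has_real_derivative (- ut x t)) (at x within {-a..a})) \<and>
        (\<forall>t>0. u1 (-a) t = 0 \<and> u1 a t = 0 \<and> u3 (-a) t = 0 \<and> u3 a t = 0))"

definition test_fun :: "real \<Rightarrow> (real \<Rightarrow> real \<Rightarrow> real) \<Rightarrow> (real \<Rightarrow> real \<Rightarrow> real) \<Rightarrow> (real \<Rightarrow> real \<Rightarrow> real) \<Rightarrow> bool" where
  "test_fun T \<phi> \<phi>x \<phi>t \<longleftrightarrow>
     (\<forall>x t. ((\<lambda>y. \<phi> y t) has_real_derivative \<phi>x x t) (at x) \<and>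
            ((\<lambda>s. \<phi> x s) has_real_derivative \<phi>t x t) (at t)) \<and>
     continuous_on UNIV (\<lambda>p. \<phi>x (fst p) (snd p)) \<and>
     continuous_on UNIV (\<lambda>p. \<phi>t (fst p) (snd p)) \<and>
     (\<exists>\<delta>>0. \<forall>x t. t \<le> \<delta> \<or> T - \<delta> \<le> t \<longrightarrow> \<phi> x t = 0)"

text \<open>Weak solution of (P): nonnegative, Hoelder continuous on each closed Q_T,
  in L^infinity(0,infinity;H^1), classical (C^{3} in x) on the positivity set P, where the
  boundary conditions hold, and the integral identity
  int_{Q_T} u phi_t + int_{P cap Q_T} u^n (u_xxx + nu u^{m-n} u_x - A u^{M-n} u_x) phi_x = 0.\<close>
definition weak_sol ::
  "real \<Rightarrow> real \<Rightarrow> real \<Rightarrow> real \<Rightarrow> real \<Rightarrow> real \<Rightarrow> (real \<Rightarrow> real) \<Rightarrow> (real \<Rightarrow> real \<Rightarrow> real) \<Rightarrow> bool"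
where
  "weak_sol a n \<nu> A m M u0 u \<longleftrightarrow>
     (\<forall>x\<in>{-a..a}. \<forall>t\<ge>0. 0 \<le> u x t) \<and>
     (\<forall>T>0. holder_on ({-a..a} \<times> {0..T}) (\<lambda>p. u (fst p) (snd p))) \<and>
     (\<exists>K. AE t in lborel. 0 < t \<longrightarrow> H1_bounded a (\<lambda>x. u x t) K) \<and>
     (\<forall>x\<in>{-a..a}. u x 0 = u0 x) \<and>
     (let P = {p. fst p \<in> {-a..a} \<and> 0 < snd p \<and> 0 < u (fst p) (snd p)} in
      \<exists>u1 u2 u3.
        (\<forall>(x,t)\<in>P.
           ((\<lambda>y. u y t) has_real_derivative u1 x t) (at x within {-a..a}) \<and>
           ((\<lambda>y. u1 y t) has_real_derivative u2 x t) (at x within {-a..a}) \<and>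
           ((\<lambda>y. u2 y t) has_real_derivative u3 x t) (at x within {-a..a})) \<and>
        (\<forall>t>0. (u (-a) t \<noteq> 0 \<longrightarrow> u1 (-a) t = 0 \<and> u3 (-a) t = 0) \<and>
               (u a t \<noteq> 0 \<longrightarrow> u1 a t = 0 \<and> u3 a t = 0)) \<and>
        (\<forall>T>0. \<forall>\<phi> \<phi>x \<phi>t. test_fun T \<phi> \<phi>x \<phi>t \<longrightarrow>
           (let QT = {-a<..<a} \<times> {0<..<T};
                flux = (\<lambda>p. u (fst p) (snd p) powr n *
                   (u3 (fst p) (snd p) + \<nu> * u (fst p) (snd p) powr (m - n) * u1 (fst p) (snd p)
                    - A * u (fst p) (snd p) powr (M - n) * u1 (fst p) (snd p)) *
                   \<phi>x (fst p) (snd p))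
            in set_integrable lborel QT (\<lambda>p. u (fst p) (snd p) * \<phi>t (fst p) (snd p)) \<and>
               set_integrable lborel (P \<inter> QT) flux \<and>
               (LINT p:QT|lborel. u (fst p) (snd p) * \<phi>t (fst p) (snd p)) +
               (LINT p:(P \<inter> QT)|lborel. flux p) = 0)))"

definition QT_nn_integral :: "real \<Rightarrow> real \<Rightarrow> (real \<Rightarrow> real \<Rightarrow> real) \<Rightarrow> ennreal" where
  "QT_nn_integral a T F =
     (\<integral>\<^sup>+ p. ennreal (indicator ({-a<..<a} \<times> {0<..<T}) p * F (fst p) (snd p)) \<partial>lborel)"

end

theory Submission
  imports Defs
begin

(* Fix \<alpha> \<in> \<Psi>, put \<gamma>\<^sub>0 = (1+n+\<alpha>)/3 \<in> (0,1), choose \<gamma> slightly above \<gamma>\<^sub>0 and set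
   w = u\<^sub>\<epsilon>^\<gamma>, r = \<gamma>\<^sub>0/\<gamma> \<in> (0,1).  The two a priori integrals control the weighted energy
   \<integral> w^(3r-2) (w'')^2 + w^(3r-4) (w')^4 of w; by Tonelli and Fatou this energy is bounded,
   for almost every t, on the t-slices of infinitely many u\<^sub>\<epsilon>.  In one dimension such a bound,
   together with w'(-a) = 0, gives |w'| \<le> C w^(1-r) and a uniform modulus of continuity of w'.
   Hence the slopes are equicontinuous, and since u\<^sub>\<epsilon> \<rightarrow> u uniformly, u(\<cdot>,t)^\<gamma> is C^1.
   Letting \<alpha> \<rightarrow> inf \<Psi> and \<gamma> \<rightarrow> \<gamma>\<^sub>0, every power u^(1/\<beta>) with 1/\<beta> > (1+n+inf \<Psi>)/3 is C^1. *)

lemma powr_half_square: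
  fixes W e :: real
  assumes "0 < W"
  shows "(W powr (e/2))^2 = W powr e"
  using assms by (simp add: power2_eq_square powr_add[symmetric])

lemma abs_cube_has_derivative:
  "((\<lambda>s::real. \<bar>s\<bar>^3) has_real_derivative 3 * s * \<bar>s\<bar>) (at s)"
proof (cases "s = 0")
  case True
  have "((\<lambda>y::real. (\<bar>y\<bar>^3 - \<bar>0\<bar>^3) / (y - 0)) \<longlongrightarrow> 0) (at 0)"
  proof (rule Lim_null_comparison[where g="\<lambda>y. y^2"])
    show "\<forall>\<^sub>F y in at (0::real). norm ((\<bar>y\<bar>^3 - \<bar>0\<bar>^3) / (y - 0)) \<le> y^2"
      by (auto simp: abs_mult power_abs eval_nat_numeral field_simps)
  qed (auto intro!: tendsto_eq_intros)
  then show ?thesis using True by (simp add: has_field_derivative_iff)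
next
  case False
  show ?thesis
  proof (cases "s > 0")
    case True
    have ev: "\<forall>\<^sub>F y in nhds s. \<bar>y\<bar>^3 = y^3"
      using eventually_nhds_in_open[of "{0<..}" s] True by (auto elim!: eventually_mono)
    have "((\<lambda>y::real. y^3) has_real_derivative 3 * s * \<bar>s\<bar>) (at s)"
      using True by (auto intro!: derivative_eq_intros simp: power2_eq_square)
    then show ?thesis
      by (rule DERIV_cong_ev[THEN iffD1, rotated -1]) (use ev in \<open>auto elim!: eventually_mono\<close>)
  next
    case nonpos: False
    then have neg: "s < 0" using \<open>s \<noteq> 0\<close> by auto
    have ev: "\<forall>\<^sub>F y in nhds s. \<bar>y\<bar>^3 = -(y^3)"
      using eventually_nhds_in_open[of "{..<0}" s] neg by (auto elim!: eventually_mono)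
    have "((\<lambda>y::real. -(y^3)) has_real_derivative 3 * s * \<bar>s\<bar>) (at s)"
      using neg by (auto intro!: derivative_eq_intros simp: power2_eq_square)
    then show ?thesis
      by (rule DERIV_cong_ev[THEN iffD1, rotated -1]) (use ev in \<open>auto elim!: eventually_mono\<close>)
  qed
qed

(* Pointwise form of the decay estimate: the derivative of |z|^3 W^(3r-3), for a profile value W, slope z
   and curvature z', is dominated by five times the weighted energy density (AM-GM). *)
lemma decay_rate_le_energy:
  fixes W r z z' :: real
  assumes W: "0 < W" and r: "0 < r" "r < 1"
  shows "3 * z * \<bar>z\<bar> * z' * W powr (3*r-3) + \<bar>z\<bar>^3 * ((3*r-3) * W powr (3*r-4) * z)
         \<le> 5 * (W powr (3*r-2) * z'^2 + W powr (3*r-4) * z^4)"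
proof -
  define P Q where "P = W powr ((3*r-2)/2)" and "Q = W powr ((3*r-4)/2)"
  have "(3*r-2)/2 + (3*r-4)/2 = 3*r-3" by (simp add: field_simps)
  then have PQ: "P * Q = W powr (3*r-3)" by (simp only: P_def Q_def powr_add[symmetric])
  have P2: "P^2 = W powr (3*r-2)" and Q2: "Q^2 = W powr (3*r-4)"
    using powr_half_square[OF W] by (simp_all add: P_def Q_def)
  have PQ0: "0 \<le> P" "0 \<le> Q" by (simp_all add: P_def Q_def)
  have amgm: "2 * ((P * \<bar>z'\<bar>) * (Q * z^2)) \<le> P^2 * z'^2 + Q^2 * z^4"
    using sum_squares_bound[of "P * \<bar>z'\<bar>" "Q * z^2"]
    by (simp add: power_mult_distrib power2_abs mult.assoc flip: power_mult)
  have "z * \<bar>z\<bar> * z' \<le> \<bar>z'\<bar> * z^2"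
    using abs_ge_self[of "z * \<bar>z\<bar> * z'"] by (simp add: abs_mult power2_eq_square mult.commute)
  then have t1: "3 * z * \<bar>z\<bar> * z' * (P * Q) \<le> 3 * ((P * \<bar>z'\<bar>) * (Q * z^2))"
    using mult_right_mono[OF _ mult_nonneg_nonneg[OF PQ0], of "z * \<bar>z\<bar> * z'" "\<bar>z'\<bar> * z^2"]
    by (simp add: algebra_simps)
  have "\<bar>z\<bar>^3 * (k * Q^2 * z) \<le> \<bar>k\<bar> * (Q^2 * z^4)" for k
  proof -
    have "\<bar>z\<bar>^3 * (k * Q^2 * z) \<le> \<bar>\<bar>z\<bar>^3 * (k * Q^2 * z)\<bar>" by simp
    also have "\<dots> = \<bar>k\<bar> * (Q^2 * z^4)" by (simp add: abs_mult power_abs eval_nat_numeral)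
    finally show ?thesis .
  qed
  then have "\<bar>z\<bar>^3 * ((3*r-3) * Q^2 * z) \<le> \<bar>3*r-3\<bar> * (Q^2 * z^4)" .
  also have "\<dots> \<le> 3 * (Q^2 * z^4)" using r by (intro mult_right_mono) auto
  finally have t2: "\<bar>z\<bar>^3 * ((3*r-3) * Q^2 * z) \<le> 3 * (Q^2 * z^4)" .
  have "0 \<le> P^2 * z'^2" "0 \<le> Q^2 * z^4" by simp_all
  with t1 t2 amgm show ?thesis unfolding PQ[symmetric] P2[symmetric] Q2[symmetric] by argo
qed

lemma curvature_le_energy:
  fixes W r z z' \<eta> M \<mu> :: real
  assumes \<mu>: "0 < \<mu>" and \<eta>: "0 < \<eta>" and W: "\<eta> \<le> W" "W \<le> M"
  shows "\<bar>z'\<bar> \<le> \<mu>/2 * (W powr (3*r-2) * z'^2 + W powr (3*r-4) * z^4)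
                 + (\<eta> powr (2-3*r) + M powr (2-3*r)) / (2*\<mu>)"
proof -
  have W0: "0 < W" using \<eta> W by linarith
  define P R where "P = W powr ((3*r-2)/2)" and "R = W powr ((2-3*r)/2)"
  have "(3*r-2)/2 + (2-3*r)/2 = 0" by (simp add: field_simps)
  then have PR: "P * R = 1" using W0 by (simp only: P_def R_def powr_add[symmetric]) simp
  have P2: "P^2 = W powr (3*r-2)" and R2: "R^2 = W powr (2-3*r)"
    using powr_half_square[OF W0] by (simp_all add: P_def R_def)
  have "2 * ((\<mu> * (P * \<bar>z'\<bar>)) * R) \<le> (\<mu> * (P * \<bar>z'\<bar>))^2 + R^2"
    using sum_squares_bound[of "\<mu> * (P * \<bar>z'\<bar>)" R] by (simp add: mult.assoc)
  moreover have "(\<mu> * (P * \<bar>z'\<bar>)) * R = \<mu> * \<bar>z'\<bar>" using PR by (simp add: algebra_simps)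
  ultimately have "2 * \<mu> * \<bar>z'\<bar> \<le> \<mu>^2 * (P^2 * z'^2) + R^2"
    by (simp add: power_mult_distrib)
  then have amgm: "\<bar>z'\<bar> \<le> \<mu>/2 * (P^2 * z'^2) + R^2 / (2*\<mu>)"
    using \<mu> by (simp add: field_simps power2_eq_square)
  have "R^2 \<le> \<eta> powr (2-3*r) + M powr (2-3*r)"
  proof (cases "0 \<le> 2-3*r")
    case True
    then have "W powr (2-3*r) \<le> M powr (2-3*r)" using W0 W by (intro powr_mono2) auto
    then show ?thesis unfolding R2 using powr_ge_zero[of \<eta> "2-3*r"] by linarith
  next
    case False
    then have "W powr (2-3*r) \<le> \<eta> powr (2-3*r)" using \<eta> W by (intro powr_mono2') auto
    then show ?thesis unfolding R2 using powr_ge_zero[of M "2-3*r"] by linarith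
  qed
  then have "R^2 / (2*\<mu>) \<le> (\<eta> powr (2-3*r) + M powr (2-3*r)) / (2*\<mu>)"
    using \<mu> by (intro divide_right_mono) auto
  moreover have "\<mu>/2 * (P^2 * z'^2) \<le> \<mu>/2 * (W powr (3*r-2) * z'^2 + W powr (3*r-4) * z^4)"
    using \<mu> unfolding P2 by (intro mult_left_mono) auto
  ultimately show ?thesis using amgm by linarith
qed

definition energy_density ::
  "real \<Rightarrow> (real \<Rightarrow> real) \<Rightarrow> (real \<Rightarrow> real) \<Rightarrow> (real \<Rightarrow> real) \<Rightarrow> real \<Rightarrow> real" where
  "energy_density r w z z' s = w s powr (3*r-2) * (z' s)^2 + w s powr (3*r-4) * (z s)^4"

(* For w = u^\<gamma> with r = \<gamma>\<^sub>0/\<gamma>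
   the energy is controlled by the two a priori integrals of the theorem. *)
definition weighted_profile ::
  "real \<Rightarrow> real \<Rightarrow> real \<Rightarrow> real \<Rightarrow> (real \<Rightarrow> real) \<Rightarrow> (real \<Rightarrow> real) \<Rightarrow> (real \<Rightarrow> real) \<Rightarrow> bool" where
  "weighted_profile lo hi r K w z z' \<longleftrightarrow>
     (\<forall>x\<in>{lo..hi}. 0 < w x) \<and>
     (\<forall>x\<in>{lo..hi}. (w has_real_derivative z x) (at x within {lo..hi})) \<and>
     (\<forall>x\<in>{lo..hi}. (z has_real_derivative z' x) (at x within {lo..hi})) \<and>
     continuous_on {lo..hi} z' \<and>
     (\<forall>x y. lo \<le> x \<longrightarrow> x \<le> y \<longrightarrow> y \<le> hi \<longrightarrow> integral {x..y} (energy_density r w z z') \<le> K)"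

lemma ftc_subinterval:
  assumes "lo \<le> x" "x \<le> y" "y \<le> hi"
    and d: "\<And>s. s \<in> {lo..hi} \<Longrightarrow> (f has_real_derivative f' s) (at s within {lo..hi})"
  shows "(f' has_integral f y - f x) {x..y}"
proof (rule fundamental_theorem_of_calculus)
  fix s assume "s \<in> {x..y}"
  then have "(f has_real_derivative f' s) (at s within {x..y})"
    using assms by (intro DERIV_subset[OF d]) auto
  then show "(f has_vector_derivative f' s) (at s within {x..y})"
    by (simp add: has_real_derivative_iff_has_vector_derivative)
qed (use assms in auto)

context
  fixes lo hi r K :: real and w z z' :: "real \<Rightarrow> real"
  assumes profile: "weighted_profile lo hi r K w z z'"
begin

lemma profile_pos: "x \<in> {lo..hi} \<Longrightarrow> 0 < w x"
  and profile_slope: "x \<in> {lo..hi} \<Longrightarrow> (w has_real_derivative z x) (at x within {lo..hi})"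
  and profile_curvature: "x \<in> {lo..hi} \<Longrightarrow> (z has_real_derivative z' x) (at x within {lo..hi})"
  and profile_energy: "lo \<le> x \<Longrightarrow> x \<le> y \<Longrightarrow> y \<le> hi \<Longrightarrow> integral {x..y} (energy_density r w z z') \<le> K"
  using profile unfolding weighted_profile_def by auto

lemma profile_continuous:
  "continuous_on {lo..hi} w" "continuous_on {lo..hi} z" "continuous_on {lo..hi} z'"
  "continuous_on {lo..hi} (energy_density r w z z')"
proof -
  show cw: "continuous_on {lo..hi} w" and cz: "continuous_on {lo..hi} z"
    using profile_slope profile_curvature
    by (meson DERIV_continuous continuous_on_eq_continuous_within)+
  show cz': "continuous_on {lo..hi} z'" using profile unfolding weighted_profile_def by blast
  have "\<forall>s\<in>{lo..hi}. w s \<noteq> 0" using profile_pos by force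
  then show "continuous_on {lo..hi} (energy_density r w z z')"
    unfolding energy_density_def by (intro continuous_intros cw cz cz') auto
qed

lemma profile_energy_nonneg: "lo \<le> hi \<Longrightarrow> 0 \<le> K"
  using profile_energy[of lo lo] by simp

(* Decay estimate: if the slope vanishes at the left end point, then |z|^3 w^(3r-3) \<le> 5K.
   Indeed d/dx (|z|^3 w^(3r-3)) is bounded by five times the energy density. *)
lemma profile_decay:
  assumes r: "0 < r" "r < 1" and z0: "z lo = 0" and x: "x \<in> {lo..hi}"
  shows "\<bar>z x\<bar>^3 * w x powr (3*r-3) \<le> 5 * K"
proof -
  define G where "G s = \<bar>z s\<bar>^3 * w s powr (3*r-3)" for s
  define G' where "G' s = 3 * z s * \<bar>z s\<bar> * z' s * w s powr (3*r-3)
                        + \<bar>z s\<bar>^3 * ((3*r-3) * w s powr (3*r-4) * z s)" for s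
  have dG: "(G has_real_derivative G' s) (at s within {lo..hi})" if s: "s \<in> {lo..hi}" for s
  proof -
    have d1: "((\<lambda>s. \<bar>z s\<bar>^3) has_real_derivative 3 * z s * \<bar>z s\<bar> * z' s) (at s within {lo..hi})"
      using DERIV_chain2[OF abs_cube_has_derivative profile_curvature[OF s]] by simp
    have d2: "((\<lambda>s. w s powr (3*r-3)) has_real_derivative (3*r-3) * w s powr (3*r-4) * z s)
        (at s within {lo..hi})"
      using DERIV_chain2[OF has_real_derivative_powr[OF profile_pos[OF s], of "3*r-3"] profile_slope[OF s]]
      by (simp add: algebra_simps)
    show ?thesis unfolding G_def G'_def using DERIV_mult[OF d1 d2] by (simp add: algebra_simps)
  qed
  have xs: "lo \<le> x" "x \<le> hi" using x by auto
  have "(G' has_integral G x - G lo) {lo..x}" using ftc_subinterval[OF order_refl xs dG] .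
  moreover have "(energy_density r w z z' has_integral integral {lo..x} (energy_density r w z z')) {lo..x}"
    using continuous_on_subset[OF profile_continuous(4)] xs
    by (intro integrable_integral integrable_continuous_interval) auto
  ultimately have "G x - G lo \<le> 5 * integral {lo..x} (energy_density r w z z')"
  proof (rule has_integral_le[OF _ has_integral_mult_right])
    fix s assume "s \<in> {lo..x}"
    then have "0 < w s" using xs by (intro profile_pos) auto
    then show "G' s \<le> 5 * energy_density r w z z' s"
      unfolding G'_def energy_density_def by (rule decay_rate_le_energy[OF _ r])
  qed
  also have "\<dots> \<le> 5 * K" using profile_energy[OF order_refl xs] by simp
  finally show ?thesis using z0 by (simp add: G_def)
qed

lemma profile_slope_bound:
  assumes r: "0 < r" "r < 1" and z0: "z lo = 0" and x: "x \<in> {lo..hi}"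
  shows "\<bar>z x\<bar> \<le> (5*K) powr (1/3) * w x powr (1-r)"
proof -
  have W: "0 < w x" using profile_pos[OF x] .
  have K: "0 \<le> K" using x profile_energy_nonneg by auto
  have "\<bar>z x\<bar>^3 = (\<bar>z x\<bar>^3 * w x powr (3*r-3)) * w x powr (3-3*r)"
    using W by (simp add: mult.assoc powr_add[symmetric])
  also have "\<dots> \<le> 5*K * w x powr (3-3*r)"
    using profile_decay[OF r z0 x] by (intro mult_right_mono) auto
  finally have cube: "\<bar>z x\<bar> powr 3 \<le> 5*K * w x powr (3-3*r)" by (simp add: powr_realpow')
  have "\<bar>z x\<bar> = (\<bar>z x\<bar> powr 3) powr (1/3)" by (simp only: powr_powr) simp
  also have "\<dots> \<le> (5*K * w x powr (3-3*r)) powr (1/3)" using cube by (intro powr_mono2) auto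
  also have "\<dots> = (5*K) powr (1/3) * w x powr (1-r)"
    using K W by (simp add: powr_mult powr_powr algebra_simps)
  finally show ?thesis .
qed

lemma profile_lipschitz:
  assumes r: "0 < r" "r < 1" and z0: "z lo = 0"
    and M: "\<And>x. x \<in> {lo..hi} \<Longrightarrow> w x \<le> M"
    and xy: "x \<in> {lo..hi}" "y \<in> {lo..hi}"
  shows "\<bar>w x - w y\<bar> \<le> (5*K) powr (1/3) * M powr (1-r) * \<bar>x - y\<bar>"
proof -
  have "norm (w x - w y) \<le> (5*K) powr (1/3) * M powr (1-r) * norm (x - y)"
  proof (rule field_differentiable_bound[OF convex_real_interval(5)])
    fix s assume s: "s \<in> {lo..hi}"
    show "(w has_field_derivative z s) (at s within {lo..hi})" using profile_slope[OF s] .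
    have "\<bar>z s\<bar> \<le> (5*K) powr (1/3) * w s powr (1-r)" using profile_slope_bound[OF r z0 s] .
    also have "\<dots> \<le> (5*K) powr (1/3) * M powr (1-r)"
      using profile_pos[OF s] M[OF s] r by (intro mult_left_mono powr_mono2) auto
    finally show "norm (z s) \<le> (5*K) powr (1/3) * M powr (1-r)" by simp
  qed (use xy in auto)
  then show ?thesis by simp
qed

(* Modulus of continuity of the slope on a subinterval where \<eta> \<le> w \<le> M:
   integrate the pointwise bound of curvature_le_energy. *)
lemma profile_slope_modulus:
  assumes xy: "lo \<le> x" "x \<le> y" "y \<le> hi" and \<eta>: "0 < \<eta>" and \<mu>: "0 < \<mu>"
    and wb: "\<And>s. s \<in> {x..y} \<Longrightarrow> \<eta> \<le> w s \<and> w s \<le> M"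
  shows "\<bar>z y - z x\<bar> \<le> \<mu>/2 * K + (y - x) * ((\<eta> powr (2-3*r) + M powr (2-3*r)) / (2*\<mu>))"
proof -
  define c where "c = (\<eta> powr (2-3*r) + M powr (2-3*r)) / (2*\<mu>)"
  define E where "E = energy_density r w z z'"
  have ftc: "(z' has_integral z y - z x) {x..y}" using ftc_subinterval[OF xy profile_curvature] .
  have iE: "(E has_integral integral {x..y} E) {x..y}"
    using continuous_on_subset[OF profile_continuous(4)] xy unfolding E_def
    by (intro integrable_integral integrable_continuous_interval) auto
  have bound: "((\<lambda>s. \<mu>/2 * E s + c) has_integral \<mu>/2 * integral {x..y} E + (y - x) * c) {x..y}"
    using has_integral_add[OF has_integral_mult_right[OF iE, of "\<mu>/2"] has_integral_const_real[of c x y]] xy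
    by (simp add: algebra_simps)
  have pw: "\<bar>z' s\<bar> \<le> \<mu>/2 * E s + c" if "s \<in> {x..y}" for s
    unfolding E_def energy_density_def c_def using wb[OF that] by (intro curvature_le_energy \<mu> \<eta>) auto
  have "z y - z x \<le> \<mu>/2 * integral {x..y} E + (y - x) * c"
    by (rule has_integral_le[OF ftc bound]) (use pw in \<open>auto simp: abs_le_iff\<close>)
  moreover have "-(z y - z x) \<le> \<mu>/2 * integral {x..y} E + (y - x) * c"
    by (rule has_integral_le[OF has_integral_neg[OF ftc] bound]) (use pw in \<open>auto simp: abs_le_iff\<close>)
  moreover have "\<mu>/2 * integral {x..y} E \<le> \<mu>/2 * K"
    using profile_energy[OF xy] \<mu> unfolding E_def by simp
  ultimately show ?thesis unfolding c_def by (simp add: abs_le_iff)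
qed

end

lemma powr_small_near_zero:
  fixes c q e :: real
  assumes "0 < q" "0 < e"
  obtains b where "0 < b" "\<And>s. 0 < s \<Longrightarrow> s < b \<Longrightarrow> c * s powr q < e"
proof -
  have "((\<lambda>s::real. s powr q) \<longlongrightarrow> 0) (at_right 0)"
    using assms(1) by (intro tendsto_zero_powrI[OF tendsto_ident_at]) (auto simp: eventually_at_right_field intro!: exI[of _ 1])
  then have "((\<lambda>s. c * s powr q) \<longlongrightarrow> c * 0) (at_right 0)" by (intro tendsto_mult tendsto_const)
  then have "\<forall>\<^sub>F s in at_right 0. c * s powr q < e" using order_tendstoD(2) assms(2) by simp
  then show ?thesis using that unfolding eventually_at_right_field by auto
qed

(* Where the profile is
   small its slope is small (profile_slope_bound); where it stays above a level \<eta> the slope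
   has the modulus of profile_slope_modulus. *)
lemma profiles_equicontinuous_slopes:
  assumes r: "0 < r" "r < 1"
    and profile: "\<And>k. weighted_profile lo hi r K (w k) (z k) (z' k)" and z0: "\<And>k. z k lo = 0"
    and M: "\<And>k x. x \<in> {lo..hi} \<Longrightarrow> w k x \<le> M" and e: "0 < e"
  shows "\<exists>d>0. \<forall>k x y. x \<in> {lo..hi} \<longrightarrow> y \<in> {lo..hi} \<longrightarrow> \<bar>x - y\<bar> < d \<longrightarrow> \<bar>z k x - z k y\<bar> < e"
proof (cases "lo \<le> hi")
  case False then show ?thesis by (intro exI[of _ 1]) auto
next
  case True
  have K: "0 \<le> K" using profile_energy_nonneg[OF profile True] .
  define c0 where "c0 = (5*K) powr (1/3)"
  obtain b where b: "0 < b" "\<And>s. 0 < s \<Longrightarrow> s < b \<Longrightarrow> c0 * s powr (1-r) < e/2"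
    using powr_small_near_zero[of "1-r" "e/2" c0] r e by auto
  define \<eta> L \<mu> where "\<eta> = b/2" and "L = c0 * M powr (1-r)" and "\<mu> = e / (4*(K+1))"
  define c where "c = (\<eta> powr (2-3*r) + M powr (2-3*r)) / (2*\<mu>)"
  define d where "d = min (\<eta>/(L+1)) (e/(4*(c+1)))"
  have pos: "0 < \<eta>" "0 \<le> L" "0 < \<mu>" "0 \<le> c"
    using b e K by (simp_all add: \<eta>_def L_def \<mu>_def c_def c0_def)
  have d: "0 < d" using pos e by (simp add: d_def)
  have close: "\<bar>z k y - z k x\<bar> < e" if xy: "lo \<le> x" "x \<le> y" "y \<le> hi" "y - x < d" for k x y
  proof (cases "\<forall>s\<in>{x..y}. \<eta> \<le> w k s")
    case True
    have "\<bar>z k y - z k x\<bar> \<le> \<mu>/2 * K + (y - x) * c"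
      unfolding c_def by (rule profile_slope_modulus[OF profile xy(1-3) pos(1,3)]) (use True M xy in auto)
    also have "\<mu>/2 * K \<le> e/8" using e K by (simp add: \<mu>_def field_simps)
    also have "(y - x) * c \<le> e/(4*(c+1)) * c" using xy pos by (intro mult_right_mono) (auto simp: d_def)
    also have "e/(4*(c+1)) * c < e/4" using e pos by (simp add: field_simps)
    finally show ?thesis using e by simp
  next
    case False
    then obtain s where s: "s \<in> {x..y}" "w k s < \<eta>" by (auto simp: not_le)
    have small: "\<bar>z k p\<bar> < e/2" if p: "p \<in> {x..y}" for p
    proof -
      have pS: "p \<in> {lo..hi}" and sS: "s \<in> {lo..hi}" using p s xy by auto
      have "L * \<bar>p - s\<bar> \<le> L * d" using p s xy pos by (intro mult_left_mono) auto
      also have "\<dots> \<le> L * (\<eta>/(L+1))" using pos by (intro mult_left_mono) (auto simp: d_def)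
      also have "\<dots> < \<eta>" using pos by (simp add: field_simps)
      finally have "w k p < b"
        using profile_lipschitz[OF profile r z0 M[where k=k] pS sS] s(2) unfolding L_def c0_def \<eta>_def by linarith
      then show ?thesis
        using profile_slope_bound[OF profile[of k] r z0 pS] b(2)[OF profile_pos[OF profile[of k] pS]]
        unfolding c0_def by linarith
    qed
    show ?thesis using small[of x] small[of y] xy by auto
  qed
  show ?thesis
  proof (intro exI[of _ d] conjI d allI impI)
    fix k x y assume "x \<in> {lo..hi}" "y \<in> {lo..hi}" "\<bar>x - y\<bar> < d"
    then show "\<bar>z k x - z k y\<bar> < e"
      using close[of x y k] close[of y x k] by (cases "x \<le> y") (auto simp: abs_minus_commute)
  qed
qed

lemma linearization_error:
  assumes d: "\<And>s. s \<in> {lo..hi} \<Longrightarrow> (w has_real_derivative z s) (at s within {lo..hi})"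
    and x: "x \<in> {lo..hi}" "x' \<in> {lo..hi}"
    and osc: "\<And>s. s \<in> {min x x'..max x x'} \<Longrightarrow> \<bar>z s - z x\<bar> \<le> \<epsilon>"
  shows "\<bar>w x' - w x - z x * (x' - x)\<bar> \<le> \<epsilon> * \<bar>x' - x\<bar>"
proof -
  define T where "T = {min x x'..max x x'}"
  have TS: "T \<subseteq> {lo..hi}" using x unfolding T_def by auto
  have "norm ((w x' - z x * x') - (w x - z x * x)) \<le> \<epsilon> * norm (x' - x)"
  proof (rule field_differentiable_bound[of T _ "\<lambda>s. z s - z x"])
    fix s assume s: "s \<in> T"
    have "(w has_real_derivative z s) (at s within T)" using DERIV_subset[OF d TS] s TS by auto
    then show "((\<lambda>s. w s - z x * s) has_real_derivative z s - z x) (at s within T)"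
      by (auto intro!: derivative_eq_intros)
    show "norm (z s - z x) \<le> \<epsilon>" using osc s unfolding T_def by simp
  qed (auto simp: T_def convex_real_interval)
  then show ?thesis by (simp add: algebra_simps)
qed

(* If the derivatives z k of a uniformly convergent sequence w k are equicontinuous on an
   interval, they are uniformly Cauchy: compare the difference quotients of w m and w n over a
   fixed step h, which differ little since w m and w n are uniformly close. *)
lemma equicontinuous_derivatives_cauchy:
  assumes lohi: "lo < hi"
    and d: "\<And>k s. s \<in> {lo..hi} \<Longrightarrow> (w k has_real_derivative z k s) (at s within {lo..hi})"
    and equi: "\<And>e. 0 < e \<Longrightarrow> \<exists>d>0. \<forall>k x y. x \<in> {lo..hi} \<longrightarrow> y \<in> {lo..hi} \<longrightarrow>
                 \<bar>x - y\<bar> < d \<longrightarrow> \<bar>z k x - z k y\<bar> < e"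
    and conv: "uniform_limit {lo..hi} w W sequentially"
    and e: "0 < e"
  shows "\<exists>N. \<forall>m n x. N \<le> m \<and> N \<le> n \<and> x \<in> {lo..hi} \<longrightarrow> dist (z m x) (z n x) < e"
proof -
  obtain \<delta> where \<delta>: "0 < \<delta>" and equi\<delta>: "\<And>k x y. x \<in> {lo..hi} \<Longrightarrow> y \<in> {lo..hi} \<Longrightarrow>
      \<bar>x - y\<bar> < \<delta> \<Longrightarrow> \<bar>z k x - z k y\<bar> < e/4"
    using equi[of "e/4"] e by auto
  define h where "h = min (\<delta>/2) ((hi-lo)/2)"
  have h: "0 < h" "h < \<delta>" "h \<le> (hi-lo)/2" using \<delta> lohi unfolding h_def by (auto simp: min_def)
  have "0 < e*h/8" using e h by simp
  then have "\<forall>\<^sub>F k in sequentially. \<forall>x\<in>{lo..hi}. dist (w k x) (W x) < e*h/8"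
    using conv unfolding uniform_limit_iff by blast
  then obtain N where N: "\<And>k x. N \<le> k \<Longrightarrow> x \<in> {lo..hi} \<Longrightarrow> \<bar>w k x - W x\<bar> < e*h/8"
    unfolding eventually_sequentially dist_real_def by blast
  show ?thesis
  proof (intro exI[of _ N] allI impI, elim conjE)
    fix m n x assume m: "N \<le> m" and n: "N \<le> n" and x: "x \<in> {lo..hi}"
    define x' where "x' = (if x + h \<le> hi then x + h else x - h)"
    have x': "x' \<in> {lo..hi}" "\<bar>x' - x\<bar> = h" using x h unfolding x'_def by auto
    have lin: "\<bar>w k x' - w k x - z k x * (x' - x)\<bar> \<le> e/4 * h" for k
    proof -
      have "\<bar>z k s - z k x\<bar> \<le> e/4" if s: "s \<in> {min x x'..max x x'}" for s
      proof -
        have "s \<in> {lo..hi}" "\<bar>s - x\<bar> < \<delta>" using s x x' h by auto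
        then show ?thesis using equi\<delta>[of s x k] x by simp
      qed
      then show ?thesis using linearization_error[OF d[where k=k] x x'(1), of "e/4"] x'(2) by simp
    qed
    have close: "\<bar>w m p - w n p\<bar> < e*h/4" if "p \<in> {lo..hi}" for p
      using N[OF m that] N[OF n that] by linarith
    have split: "(z m x - z n x) * (x' - x) =
        (w m x' - w n x') - (w m x - w n x) - (w m x' - w m x - z m x * (x' - x))
        + (w n x' - w n x - z n x * (x' - x))"
      by (simp add: algebra_simps)
    have "\<bar>(z m x - z n x) * (x' - x)\<bar> < e * h"
      using close[OF x'(1)] close[OF x] lin[of m] lin[of n]
      unfolding split abs_less_iff abs_le_iff by linarith
    then have "\<bar>z m x - z n x\<bar> * h < e * h" using x'(2) by (simp add: abs_mult)
    then show "dist (z m x) (z n x) < e" using h by (simp add: dist_real_def)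
  qed
qed

lemma C1_of_cauchy_derivatives:
  assumes lohi: "lo \<le> hi"
    and d: "\<And>k s. s \<in> {lo..hi} \<Longrightarrow> (w k has_real_derivative z k s) (at s within {lo..hi})"
    and cz: "\<And>k. continuous_on {lo..hi} (z k)"
    and cauchy: "\<And>e. 0 < e \<Longrightarrow> \<exists>N. \<forall>m n x. N \<le> m \<and> N \<le> n \<and> x \<in> {lo..hi} \<longrightarrow> dist (z m x) (z n x) < e"
    and conv: "\<And>x. x \<in> {lo..hi} \<Longrightarrow> (\<lambda>k. w k x) \<longlonglongrightarrow> W x"
  shows "C1_on_interval lo hi W"
proof -
  define S where "S = {lo..hi}"
  obtain g where "\<And>e. 0 < e \<Longrightarrow> \<exists>N. \<forall>n x. N \<le> n \<and> x \<in> S \<longrightarrow> dist (z n x) (g x) < e"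
    using uniformly_convergent_eq_cauchy[of "\<lambda>x. x \<in> S" z] cauchy unfolding S_def by blast
  then have ulim: "\<forall>\<^sub>F n in sequentially. \<forall>x\<in>S. dist (z n x) (g x) < e" if "0 < e" for e
    using that unfolding eventually_sequentially by blast
  have cg: "continuous_on S g"
    by (rule uniform_limit_theorem[of _ z]) (use cz ulim in \<open>auto simp: S_def uniform_limit_iff\<close>)
  have "\<exists>G. \<forall>x\<in>S. (\<lambda>n. w n x) \<longlonglongrightarrow> G x \<and> (G has_derivative (\<lambda>h. g x * h)) (at x within S)"
  proof (rule has_derivative_sequence[of S w "\<lambda>n x h. z n x * h" "\<lambda>x h. g x * h" lo "W lo"])
    show "\<And>n x. x \<in> S \<Longrightarrow> (w n has_derivative (\<lambda>h. z n x * h)) (at x within S)"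
      unfolding S_def using d by (simp add: has_field_derivative_def)
    show "\<forall>\<^sub>F n in sequentially. \<forall>x\<in>S. \<forall>h. norm (z n x * h - g x * h) \<le> e * norm h" if "0 < e" for e
      using ulim[OF that]
    proof eventually_elim
      case (elim n)
      show ?case
      proof (intro ballI allI)
        fix x h assume "x \<in> S"
        then have "\<bar>z n x - g x\<bar> \<le> e" using elim by (auto simp: dist_real_def intro: less_imp_le)
        then show "norm (z n x * h - g x * h) \<le> e * norm h"
          by (simp add: abs_mult left_diff_distrib[symmetric] mult_right_mono)
      qed
    qed
  qed (use lohi conv in \<open>auto simp: S_def convex_real_interval\<close>)
  then obtain G where G: "\<And>x. x \<in> S \<Longrightarrow> (\<lambda>n. w n x) \<longlonglongrightarrow> G x"
    "\<And>x. x \<in> S \<Longrightarrow> (G has_derivative (\<lambda>h. g x * h)) (at x within S)" by blast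
  have WG: "W x = G x" if "x \<in> S" for x
    using LIMSEQ_unique[OF conv G(1)] that unfolding S_def by blast
  show ?thesis unfolding C1_on_interval_def
  proof (intro exI[of _ g] conjI ballI)
    show "continuous_on {lo..hi} g" using cg S_def by simp
    fix x assume x: "x \<in> {lo..hi}"
    have "(W has_derivative (\<lambda>h. g x * h)) (at x within S)"
      by (rule has_derivative_transform[OF _ _ G(2)]) (use x WG S_def in auto)
    then show "(W has_real_derivative g x) (at x within {lo..hi})"
      unfolding S_def has_field_derivative_def by simp
  qed
qed

lemma profiles_limit_C1:
  assumes lohi: "lo < hi" and r: "0 < r" "r < 1"
    and profile: "\<And>k. weighted_profile lo hi r K (w k) (z k) (z' k)" and z0: "\<And>k. z k lo = 0"
    and M: "\<And>k x. x \<in> {lo..hi} \<Longrightarrow> w k x \<le> M"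
    and conv: "uniform_limit {lo..hi} w W sequentially"
  shows "C1_on_interval lo hi W"
proof (rule C1_of_cauchy_derivatives)
  show "\<And>k s. s \<in> {lo..hi} \<Longrightarrow> (w k has_real_derivative z k s) (at s within {lo..hi})"
    using profile_slope[OF profile] .
  show "\<And>k. continuous_on {lo..hi} (z k)" using profile_continuous(2)[OF profile] .
  show "\<And>e. 0 < e \<Longrightarrow> \<exists>N. \<forall>m n x. N \<le> m \<and> N \<le> n \<and> x \<in> {lo..hi} \<longrightarrow> dist (z m x) (z n x) < e"
    by (rule equicontinuous_derivatives_cauchy[OF lohi profile_slope[OF profile]
          profiles_equicontinuous_slopes[OF r profile z0 M] conv])
  show "\<And>x. x \<in> {lo..hi} \<Longrightarrow> (\<lambda>k. w k x) \<longlonglongrightarrow> W x"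
    using conv by (rule tendsto_uniform_limitI)
qed (use lohi in simp)

lemma powr_subadditive:
  fixes y d g :: real
  assumes "0 \<le> y" "0 \<le> d" "0 < g" "g \<le> 1"
  shows "(y + d) powr g \<le> y powr g + d powr g"
proof (cases "y + d = 0")
  case True then show ?thesis by simp
next
  case False
  then have s: "0 < y + d" using assms by simp
  have part: "c * (y + d) powr (g - 1) \<le> c powr g" if c: "0 \<le> c" "c \<le> y + d" for c
  proof (cases "c = 0")
    case False
    then have c0: "0 < c" using c by simp
    have "(y + d) powr (g - 1) \<le> c powr (g - 1)" by (rule powr_mono2') (use assms c0 c in auto)
    then have "c * (y + d) powr (g - 1) \<le> c * c powr (g - 1)" using c0 by simp
    also have "\<dots> = c powr g" using c0 by (simp add: powr_mult_base)
    finally show ?thesis .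
  qed simp
  have "(y + d) powr g = (y + d) * (y + d) powr (g - 1)" using s by (simp add: powr_mult_base)
  also have "\<dots> = y * (y + d) powr (g - 1) + d * (y + d) powr (g - 1)" by (simp add: algebra_simps)
  also have "\<dots> \<le> y powr g + d powr g" using part[of y] part[of d] assms by (intro add_mono) auto
  finally show ?thesis .
qed

lemma powr_diff_le:
  fixes x y g :: real
  assumes "0 \<le> x" "0 \<le> y" "0 < g" "g \<le> 1"
  shows "\<bar>x powr g - y powr g\<bar> \<le> \<bar>x - y\<bar> powr g"
proof -
  have *: "\<bar>x powr g - y powr g\<bar> \<le> \<bar>x - y\<bar> powr g" if "0 \<le> y" "y \<le> x" for x y
  proof -
    have "x powr g \<le> y powr g + (x - y) powr g"
      using powr_subadditive[of y "x - y" g] that assms by simp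
    moreover have "y powr g \<le> x powr g" using that assms by (intro powr_mono2) auto
    ultimately show ?thesis using that by simp
  qed
  show ?thesis
    using *[of y x] *[of x y] assms by (cases "y \<le> x") (auto simp: abs_minus_commute)
qed

lemma powr_has_real_derivative_nonneg:
  assumes W0: "\<And>y. y \<in> S \<Longrightarrow> 0 \<le> W y" and x: "x \<in> S"
    and dW: "(W has_real_derivative g) (at x within S)" and p: "1 < p"
  shows "((\<lambda>y. W y powr p) has_real_derivative p * W x powr (p - 1) * g) (at x within S)"
proof (cases "W x = 0")
  case False
  then have "0 < W x" using W0[OF x] by simp
  then show ?thesis using DERIV_chain2[OF has_real_derivative_powr dW] by simp
next
  case True
  have q: "((\<lambda>y. (W y - W x) / (y - x)) \<longlongrightarrow> g) (at x within S)"
    using dW by (simp add: has_field_derivative_iff)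
  have "(W \<longlongrightarrow> W x) (at x within S)"
    using DERIV_continuous[OF dW] by (simp add: continuous_within)
  then have pw: "((\<lambda>y. W y powr (p - 1)) \<longlongrightarrow> W x powr (p - 1)) (at x within S)"
    using p by (intro tendsto_powr'[OF _ tendsto_const])
      (auto simp: eventually_at_filter W0 intro!: always_eventually)
  have lim: "((\<lambda>y. (W y - W x) / (y - x) * W y powr (p - 1)) \<longlongrightarrow> p * W x powr (p - 1) * g) (at x within S)"
    using tendsto_mult[OF q pw] True p by simp
  have ev: "\<forall>\<^sub>F y in at x within S.
      (W y - W x) / (y - x) * W y powr (p - 1) = (W y powr p - W x powr p) / (y - x)"
  proof -
    have "(W y - W x) / (y - x) * W y powr (p - 1) = (W y powr p - W x powr p) / (y - x)" if "y \<in> S" for y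
    proof -
      have "W y * W y powr (p - 1) = W y powr p" using powr_mult_base[OF W0[OF that]] by simp
      then show ?thesis using True p by simp
    qed
    then show ?thesis by (auto simp: eventually_at_filter intro!: always_eventually)
  qed
  show ?thesis unfolding has_field_derivative_iff using tendsto_cong[OF ev] lim by simp
qed

lemma C1_powr:
  assumes C1: "C1_on_interval lo hi W" and W0: "\<And>x. x \<in> {lo..hi} \<Longrightarrow> 0 \<le> W x" and p: "1 \<le> p"
  shows "C1_on_interval lo hi (\<lambda>x. W x powr p)"
proof -
  obtain g where cg: "continuous_on {lo..hi} g"
    and dW: "\<And>x. x \<in> {lo..hi} \<Longrightarrow> (W has_real_derivative g x) (at x within {lo..hi})"
    using C1 unfolding C1_on_interval_def by blast
  have cW: "continuous_on {lo..hi} W"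
    using dW by (meson DERIV_continuous continuous_on_eq_continuous_within)
  define D where "D x = (if p = 1 then g x else p * W x powr (p - 1) * g x)" for x
  show ?thesis unfolding C1_on_interval_def
  proof (intro exI[of _ D] conjI ballI)
    show "continuous_on {lo..hi} D"
    proof (cases "p = 1")
      case False
      then have "D = (\<lambda>x. p * W x powr (p - 1) * g x)" by (simp add: D_def fun_eq_iff)
      then show ?thesis using W0 p False cW cg by (auto intro!: continuous_intros continuous_on_powr')
    qed (use cg in \<open>simp add: D_def\<close>)
    fix x assume x: "x \<in> {lo..hi}"
    show "((\<lambda>x. W x powr p) has_real_derivative D x) (at x within {lo..hi})"
    proof (cases "p = 1")
      case True
      have "((\<lambda>x. W x powr p) has_real_derivative g x) (at x within {lo..hi})"
        by (rule has_field_derivative_transform_within[OF dW[OF x] zero_less_one x]) (use True W0 in auto)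
      then show ?thesis using True by (simp add: D_def)
    next
      case False
      then show ?thesis unfolding D_def using powr_has_real_derivative_nonneg[OF W0 x dW[OF x]] p by simp
    qed
  qed
qed

lemma C1_larger_power:
  assumes C1: "C1_on_interval lo hi (\<lambda>x. W x powr \<gamma>)" and W0: "\<And>x. x \<in> {lo..hi} \<Longrightarrow> 0 \<le> W x"
    and \<gamma>: "0 < \<gamma>" "\<gamma> \<le> q"
  shows "C1_on_interval lo hi (\<lambda>x. W x powr q)"
proof -
  have "C1_on_interval lo hi (\<lambda>x. (W x powr \<gamma>) powr (q / \<gamma>))"
    using \<gamma> by (intro C1_powr[OF C1]) auto
  moreover have "(\<lambda>x. (W x powr \<gamma>) powr (q / \<gamma>)) = (\<lambda>x. W x powr q)"
    using \<gamma> by (simp add: powr_powr)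
  ultimately show ?thesis by simp
qed

(* If W^\<gamma>\<^sub>j is C^1 for exponents \<gamma>\<^sub>j with g j < \<gamma>\<^sub>j \<le> g j + 1/(j+1), where g j > 0 and
   g j < g_lim + 1/(j+1), then W^q is C^1 for every q > g_lim: some \<gamma>\<^sub>j lies below q. *)
lemma C1_power_above_limit:
  assumes W0: "\<And>x. x \<in> {lo..hi} \<Longrightarrow> 0 \<le> W x"
    and powers: "\<And>j. \<exists>\<gamma>. g j < \<gamma> \<and> \<gamma> \<le> g j + 1 / real (Suc j) \<and> C1_on_interval lo hi (\<lambda>x. W x powr \<gamma>)"
    and g: "\<And>j. 0 < g j" "\<And>j. g j < g_lim + 1 / real (Suc j)" and q: "g_lim < q"
  shows "C1_on_interval lo hi (\<lambda>x. W x powr q)"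
proof -
  obtain j where j: "inverse (real (Suc j)) < (q - g_lim) / 2"
    using reals_Archimedean[of "(q - g_lim) / 2"] q by auto
  obtain \<gamma> where \<gamma>: "g j < \<gamma>" "\<gamma> \<le> g j + 1 / real (Suc j)"
    and C1: "C1_on_interval lo hi (\<lambda>x. W x powr \<gamma>)"
    using powers by blast
  define h where "h = 1 / real (Suc j)"
  have "0 < h" "h < (q - g_lim) / 2" using j by (simp_all add: h_def inverse_eq_divide)
  then have "\<gamma> \<le> q" using \<gamma>(2) g(2)[of j] unfolding h_def[symmetric] by argo
  then show ?thesis using C1_larger_power[OF C1 W0] \<gamma>(1) g(1)[of j] by auto
qed

lemma liminf_finite_frequently_bounded:
  fixes X :: "nat \<Rightarrow> ennreal"
  assumes "liminf X \<noteq> \<infinity>"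
  shows "\<exists>K\<ge>0. \<exists>\<^sub>F k in sequentially. X k \<le> ennreal K"
proof -
  define K where "K = enn2real (liminf X) + 1"
  have K: "0 \<le> K" unfolding K_def by simp
  have "liminf X = ennreal (enn2real (liminf X))" using assms by (simp add: ennreal_enn2real_if)
  also have "\<dots> < ennreal K"
  proof (rule ennreal_lessI)
    have "0 \<le> enn2real (liminf X)" by (rule enn2real_nonneg)
    then show "0 < K" "enn2real (liminf X) < K" unfolding K_def by linarith+
  qed
  finally have "\<not> ennreal K \<le> liminf X" by (simp add: not_le)
  then obtain y where y: "y < ennreal K" "\<not> eventually (\<lambda>k. y < X k) sequentially"
    unfolding le_Liminf_iff by auto
  then have "\<exists>\<^sub>F k in sequentially. X k \<le> y" by (simp add: not_eventually not_less)
  then have "\<exists>\<^sub>F k in sequentially. X k \<le> ennreal K" by (rule frequently_elim1) (use y in auto)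
  then show ?thesis using K by blast
qed

(* Fatou and Tonelli: if nonnegative functions on the plane have uniformly bounded integrals,
   then for almost every t their t-slices have frequently bounded integrals. *)
lemma ae_frequently_bounded_slices:
  fixes H :: "nat \<Rightarrow> real \<times> real \<Rightarrow> ennreal"
  assumes mH: "\<And>k. H k \<in> borel_measurable (lborel \<Otimes>\<^sub>M lborel)"
    and bound: "\<And>k. (\<integral>\<^sup>+ p. H k p \<partial>(lborel \<Otimes>\<^sub>M lborel)) \<le> ennreal C"
  shows "AE t in lborel. \<exists>K\<ge>0. \<exists>\<^sub>F k in sequentially. (\<integral>\<^sup>+ x. H k (x, t) \<partial>lborel) \<le> ennreal K"
proof -
  define h where "h k t = (\<integral>\<^sup>+ x. H k (x, t) \<partial>lborel)" for k t
  have mh: "h k \<in> borel_measurable lborel" for k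
    using lborel.borel_measurable_nn_integral_fst[OF measurable_pair_swap[OF mH[of k]]]
    unfolding h_def by simp
  have "(\<integral>\<^sup>+ t. liminf (\<lambda>k. h k t) \<partial>lborel) \<le> liminf (\<lambda>k. \<integral>\<^sup>+ t. h k t \<partial>lborel)"
    by (rule nn_integral_liminf[OF mh])
  also have "\<dots> \<le> ennreal C"
    unfolding h_def by (rule Liminf_le) (auto simp: lborel_pair.nn_integral_snd[OF mH] bound)
  finally have "(\<integral>\<^sup>+ t. liminf (\<lambda>k. h k t) \<partial>lborel) \<noteq> \<infinity>" by (auto simp: top_unique)
  then have "AE t in lborel. liminf (\<lambda>k. h k t) \<noteq> \<infinity>"
    by (rule nn_integral_PInf_AE[OF borel_measurable_liminf[OF mh]])
  then show ?thesis by eventually_elim (use liminf_finite_frequently_bounded in \<open>auto simp: h_def\<close>)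
qed

lemma interval_integral_le_nn_integral:
  fixes \<Phi> \<Theta> :: "real \<Rightarrow> real"
  assumes c\<Phi>: "continuous_on {lo..hi} \<Phi>" and nonneg: "\<And>s. s \<in> {lo..hi} \<Longrightarrow> 0 \<le> \<Phi> s"
    and le: "\<And>s. s \<in> {lo<..<hi} \<Longrightarrow> \<Phi> s \<le> \<Theta> s"
    and bound: "(\<integral>\<^sup>+ s. ennreal (indicator {lo<..<hi} s * \<Theta> s) \<partial>lborel) \<le> ennreal K"
    and K: "0 \<le> K" and xy: "lo \<le> x" "x \<le> y" "y \<le> hi"
  shows "integral {x..y} \<Phi> \<le> K"
proof -
  define f where "f s = indicator {x..y} s * \<Phi> s" for s
  have sub: "{x..y} \<subseteq> {lo..hi}" using xy by auto
  have c\<Phi>': "continuous_on {x..y} \<Phi>" using continuous_on_subset[OF c\<Phi> sub] .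
  have fm: "f \<in> borel_measurable borel"
    unfolding f_def using borel_measurable_continuous_on_indicator[OF _ c\<Phi>'] by simp
  have f0: "0 \<le> f s" for s using nonneg sub by (auto simp: f_def indicator_def)
  have "(\<Phi> has_integral integral {x..y} \<Phi>) {x..y}"
    using integrable_continuous_interval[OF c\<Phi>'] by (simp add: has_integral_integral)
  then have "((\<lambda>s. if s \<in> {x..y} then \<Phi> s else 0) has_integral integral {x..y} \<Phi>) UNIV"
    by (rule has_integral_restrict_UNIV[THEN iffD2])
  moreover have "f = (\<lambda>s. if s \<in> {x..y} then \<Phi> s else 0)" by (auto simp: f_def fun_eq_iff)
  ultimately have "(f has_integral integral {x..y} \<Phi>) UNIV" by simp
  then have "ennreal (integral {x..y} \<Phi>) = (\<integral>\<^sup>+ s. ennreal (f s) \<partial>lborel)"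
    using nn_integral_has_integral_lborel[OF fm f0] by simp
  also have "\<dots> \<le> (\<integral>\<^sup>+ s. ennreal (indicator {lo<..<hi} s * \<Theta> s) \<partial>lborel)"
  proof (rule nn_integral_mono_AE)
    show "AE s in lborel. ennreal (f s) \<le> ennreal (indicator {lo<..<hi} s * \<Theta> s)"
      using AE_lborel_singleton[of lo] AE_lborel_singleton[of hi]
    proof eventually_elim
      case (elim s)
      show ?case
      proof (cases "s \<in> {x..y}")
        case True
        then have "s \<in> {lo<..<hi}" using elim sub by auto
        then show ?thesis using le[of s] True by (auto simp: f_def intro!: ennreal_leI)
      qed (simp add: f_def)
    qed
  qed
  also have "\<dots> \<le> ennreal K" by (rule bound)
  finally show ?thesis using K by (simp add: ennreal_le_iff)
qed

lemma frequently_subsequence: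
  assumes "\<exists>\<^sub>F k in sequentially. P k"
  shows "\<exists>s::nat \<Rightarrow> nat. strict_mono s \<and> (\<forall>j. P (s j))"
proof -
  have "infinite {k. P k}" using assms by (simp add: frequently_cofinite flip: cofinite_eq_sequentially)
  then show ?thesis using infinite_enumerate by blast
qed

definition power_slope :: "real \<Rightarrow> (real \<Rightarrow> real) \<Rightarrow> (real \<Rightarrow> real) \<Rightarrow> real \<Rightarrow> real" where
  "power_slope \<gamma> v v' x = \<gamma> * v x powr (\<gamma> - 1) * v' x"

definition power_curvature ::
  "real \<Rightarrow> (real \<Rightarrow> real) \<Rightarrow> (real \<Rightarrow> real) \<Rightarrow> (real \<Rightarrow> real) \<Rightarrow> real \<Rightarrow> real" where
  "power_curvature \<gamma> v v' v'' x = \<gamma> * (\<gamma> - 1) * v x powr (\<gamma> - 2) * (v' x)^2 + \<gamma> * v x powr (\<gamma> - 1) * v'' x"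

lemma power_has_derivatives:
  assumes pos: "0 < v x"
    and dv: "(v has_real_derivative v' x) (at x within S)"
    and dv1: "(v' has_real_derivative v'' x) (at x within S)"
  shows "((\<lambda>y. v y powr \<gamma>) has_real_derivative power_slope \<gamma> v v' x) (at x within S)"
    and "(power_slope \<gamma> v v' has_real_derivative power_curvature \<gamma> v v' v'' x) (at x within S)"
proof -
  show "((\<lambda>y. v y powr \<gamma>) has_real_derivative power_slope \<gamma> v v' x) (at x within S)"
    using DERIV_chain2[OF has_real_derivative_powr[OF pos] dv] by (simp add: power_slope_def)
  have "((\<lambda>y. v y powr (\<gamma> - 1)) has_real_derivative (\<gamma> - 1) * v x powr (\<gamma> - 2) * v' x) (at x within S)"
    using DERIV_chain2[OF has_real_derivative_powr[OF pos, of "\<gamma> - 1"] dv] by (simp add: algebra_simps)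
  from DERIV_mult[OF DERIV_cmult[OF this] dv1]
  show "(power_slope \<gamma> v v' has_real_derivative power_curvature \<gamma> v v' v'' x) (at x within S)"
    unfolding power_slope_def power_curvature_def by (simp add: algebra_simps power2_eq_square)
qed

(* At interior points the derivatives of the theorem's integrands, written with deriv, agree
   with the classical derivatives. *)
lemma deriv_power_curvature:
  assumes pos: "\<And>y. y \<in> {lo..hi} \<Longrightarrow> 0 < v y"
    and dv: "\<And>y. y \<in> {lo..hi} \<Longrightarrow> (v has_real_derivative v' y) (at y within {lo..hi})"
    and dv1: "\<And>y. y \<in> {lo..hi} \<Longrightarrow> (v' has_real_derivative v'' y) (at y within {lo..hi})"
    and x: "x \<in> {lo<..<hi}"
  shows "deriv v x = v' x"
    and "deriv (\<lambda>y. deriv (\<lambda>z. v z powr \<gamma>) y) x = power_curvature \<gamma> v v' v'' x"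
proof -
  have at: "at y within {lo..hi} = at y" if "y \<in> {lo<..<hi}" for y
    by (rule at_within_interior) (use that in simp)
  have xx: "x \<in> {lo..hi}" using x by auto
  show "deriv v x = v' x" using dv[OF xx] at[OF x] by (simp add: DERIV_imp_deriv)
  have slope: "deriv (\<lambda>z. v z powr \<gamma>) y = power_slope \<gamma> v v' y" if y: "y \<in> {lo<..<hi}" for y
  proof -
    have yy: "y \<in> {lo..hi}" using y by auto
    show ?thesis using power_has_derivatives(1)[where v=v and v'=v' and v''=v'' and x=y, OF pos[OF yy] dv[OF yy] dv1[OF yy]] at[OF y]
      by (simp add: DERIV_imp_deriv)
  qed
  have "(power_slope \<gamma> v v' has_real_derivative power_curvature \<gamma> v v' v'' x) (at x)"
    using power_has_derivatives(2)[where v=v and v'=v' and v''=v'' and x=x, OF pos[OF xx] dv[OF xx] dv1[OF xx]] at[OF x] by simp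
  then have "((\<lambda>y. deriv (\<lambda>z. v z powr \<gamma>) y) has_real_derivative power_curvature \<gamma> v v' v'' x) (at x)"
    by (rule has_field_derivative_transform_within_open[OF _ open_greaterThanLessThan x]) (simp add: slope)
  then show "deriv (\<lambda>y. deriv (\<lambda>z. v z powr \<gamma>) y) x = power_curvature \<gamma> v v' v'' x"
    by (simp add: DERIV_imp_deriv)
qed

(* For w = v^\<gamma> and r = \<gamma>\<^sub>0/\<gamma> with 0 < \<gamma> \<le> 1, the weighted energy density of w is dominated by
   v^(3\<gamma>\<^sub>0-2\<gamma>) (w'')^2 + v^(3\<gamma>\<^sub>0-4) (v')^4, the integrands of the a priori bounds. *)
lemma power_energy_density_le:
  fixes V V1 zp \<gamma> \<gamma>0 r :: real
  assumes V: "0 < V" and \<gamma>: "0 < \<gamma>" "\<gamma> \<le> 1" and r: "\<gamma> * r = \<gamma>0"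
  shows "(V powr \<gamma>) powr (3*r-2) * zp^2 + (V powr \<gamma>) powr (3*r-4) * (\<gamma> * V powr (\<gamma>-1) * V1)^4
     \<le> V powr (3*\<gamma>0 - 2*\<gamma>) * zp^2 + V powr (3*\<gamma>0 - 4) * V1^4"
proof -
  have e1: "(V powr \<gamma>) powr (3*r-2) = V powr (3*\<gamma>0 - 2*\<gamma>)"
    by (simp add: powr_powr r[symmetric] algebra_simps)
  have "(V powr \<gamma>) powr (3*r-4) * (V powr (\<gamma>-1))^4 = V powr (3*\<gamma>0 - 4*\<gamma>) * V powr (4*\<gamma> - 4)"
    using V by (simp add: powr_powr powr_power r[symmetric] algebra_simps)
  also have "\<dots> = V powr (3*\<gamma>0 - 4)" by (simp flip: powr_add)
  finally have e2: "(V powr \<gamma>) powr (3*r-4) * (\<gamma> * V powr (\<gamma>-1) * V1)^4 = \<gamma>^4 * (V powr (3*\<gamma>0 - 4) * V1^4)"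
    by (simp add: power_mult_distrib algebra_simps)
  have "\<gamma>^4 * (V powr (3*\<gamma>0 - 4) * V1^4) \<le> 1 * (V powr (3*\<gamma>0 - 4) * V1^4)"
    using \<gamma> by (intro mult_right_mono) (auto simp: power_le_one zero_le_even_power)
  then show ?thesis unfolding e1 e2 by simp
qed

lemma QT_nn_integral_product:
  "QT_nn_integral a T F =
     (\<integral>\<^sup>+ p. ennreal (indicator ({-a<..<a} \<times> {0<..<T}) p * F (fst p) (snd p)) \<partial>(lborel \<Otimes>\<^sub>M lborel))"
  unfolding QT_nn_integral_def lborel_prod ..

lemma QT_nn_integral_cong:
  assumes "\<And>x t. x \<in> {-a<..<a} \<Longrightarrow> t \<in> {0<..<T} \<Longrightarrow> F x t = G x t"
  shows "QT_nn_integral a T F = QT_nn_integral a T G"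
  unfolding QT_nn_integral_def using assms
  by (intro nn_integral_cong) (auto simp: indicator_def mem_Times_iff)

lemma QT_integrand_measurable:
  fixes F :: "real \<Rightarrow> real \<Rightarrow> real"
  assumes "continuous_on ({-a<..<a} \<times> {0<..<T}) (\<lambda>p. F (fst p) (snd p))"
  shows "(\<lambda>p. ennreal (indicator ({-a<..<a} \<times> {0<..<T}) p * F (fst p) (snd p)))
           \<in> borel_measurable (lborel \<Otimes>\<^sub>M lborel)"
proof -
  have "open ({-a<..<a} \<times> {0<..<T})" by (intro open_Times) auto
  then have "(\<lambda>p. indicator ({-a<..<a} \<times> {0<..<T}) p * F (fst p) (snd p)) \<in> borel_measurable borel"
    using borel_measurable_continuous_on_indicator[OF _ assms] by simp
  then have "(\<lambda>p. indicator ({-a<..<a} \<times> {0<..<T}) p * F (fst p) (snd p)) \<in> borel_measurable lborel"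
    using measurable_cong_sets[OF sets_lborel refl] by blast
  then show ?thesis unfolding lborel_prod by simp
qed

lemma QT_nn_integral_add:
  assumes "continuous_on ({-a<..<a} \<times> {0<..<T}) (\<lambda>p. F (fst p) (snd p))"
    and "continuous_on ({-a<..<a} \<times> {0<..<T}) (\<lambda>p. G (fst p) (snd p))"
    and "\<And>x t. x \<in> {-a<..<a} \<Longrightarrow> t \<in> {0<..<T} \<Longrightarrow> 0 \<le> F x t \<and> 0 \<le> G x t"
  shows "QT_nn_integral a T (\<lambda>x t. F x t + G x t) = QT_nn_integral a T F + QT_nn_integral a T G"
proof -
  have "QT_nn_integral a T (\<lambda>x t. F x t + G x t) =
      (\<integral>\<^sup>+ p. ennreal (indicator ({-a<..<a} \<times> {0<..<T}) p * F (fst p) (snd p))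
             + ennreal (indicator ({-a<..<a} \<times> {0<..<T}) p * G (fst p) (snd p)) \<partial>(lborel \<Otimes>\<^sub>M lborel))"
    unfolding QT_nn_integral_product using assms(3)
    by (intro nn_integral_cong) (auto simp: indicator_def mem_Times_iff ennreal_plus)
  also have "\<dots> = QT_nn_integral a T F + QT_nn_integral a T G"
    unfolding QT_nn_integral_product using assms(1,2)
    by (intro nn_integral_add QT_integrand_measurable) auto
  finally show ?thesis .
qed

lemma continuous_slice:
  assumes "continuous_on ({-a..a} \<times> {0<..}) (\<lambda>p. F (fst p) (snd p))" and "0 < t"
  shows "continuous_on {-a..a} (\<lambda>x. F x t)"
  by (rule continuous_on_compose2[OF assms(1), of _ "\<lambda>x. (x, t)", simplified])
     (use assms(2) in \<open>auto intro!: continuous_intros\<close>)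

(* The setting of the theorem, abstracted from the equation: positive functions U k on
   [-a,a] x (0,\<infinity>) with continuous x-derivatives U1 k and U2 k, Neumann condition
   U1 k (-a) t = 0, converging uniformly on every [-a,a] x [0,T] to the nonnegative limit u. *)
locale approximating_family =
  fixes a :: real and U U1 U2 :: "nat \<Rightarrow> real \<Rightarrow> real \<Rightarrow> real" and u :: "real \<Rightarrow> real \<Rightarrow> real"
  assumes a_pos: "0 < a"
    and U_pos: "\<And>k x t. x \<in> {-a..a} \<Longrightarrow> 0 < t \<Longrightarrow> 0 < U k x t"
    and U_cont: "\<And>k. continuous_on ({-a..a} \<times> {0<..}) (\<lambda>p. U k (fst p) (snd p))"
    and U1_cont: "\<And>k. continuous_on ({-a..a} \<times> {0<..}) (\<lambda>p. U1 k (fst p) (snd p))"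
    and U2_cont: "\<And>k. continuous_on ({-a..a} \<times> {0<..}) (\<lambda>p. U2 k (fst p) (snd p))"
    and U_dx: "\<And>k x t. x \<in> {-a..a} \<Longrightarrow> 0 < t \<Longrightarrow>
                 ((\<lambda>y. U k y t) has_real_derivative U1 k x t) (at x within {-a..a})"
    and U1_dx: "\<And>k x t. x \<in> {-a..a} \<Longrightarrow> 0 < t \<Longrightarrow>
                 ((\<lambda>y. U1 k y t) has_real_derivative U2 k x t) (at x within {-a..a})"
    and U1_left: "\<And>k t. 0 < t \<Longrightarrow> U1 k (-a) t = 0"
    and u_nonneg: "\<And>x t. x \<in> {-a..a} \<Longrightarrow> 0 < t \<Longrightarrow> 0 \<le> u x t"
    and U_conv: "\<And>T. 0 < T \<Longrightarrow> uniform_limit ({-a..a} \<times> {0..T})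
                   (\<lambda>k p. U k (fst p) (snd p)) (\<lambda>p. u (fst p) (snd p)) sequentially"
begin

(* The two parts of the energy of U k: the first with the curvature of U k^\<gamma>, the second with
   the slope of U k.  They are the integrands of the a priori bounds, written classically. *)
definition curvature_energy :: "real \<Rightarrow> real \<Rightarrow> nat \<Rightarrow> real \<Rightarrow> real \<Rightarrow> real" where
  "curvature_energy e \<gamma> k x t =
     U k x t powr e * (power_curvature \<gamma> (\<lambda>y. U k y t) (\<lambda>y. U1 k y t) (\<lambda>y. U2 k y t) x)^2"

definition slope_energy :: "real \<Rightarrow> nat \<Rightarrow> real \<Rightarrow> real \<Rightarrow> real" where
  "slope_energy e k x t = U k x t powr e * (U1 k x t)^4"

lemma energy_nonneg: "0 \<le> curvature_energy e \<gamma> k x t" "0 \<le> slope_energy e' k x t"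
  by (simp_all add: curvature_energy_def slope_energy_def zero_le_even_power)

lemma energy_continuous:
  "continuous_on ({-a..a} \<times> {0<..}) (\<lambda>p. curvature_energy e \<gamma> k (fst p) (snd p))"
  "continuous_on ({-a..a} \<times> {0<..}) (\<lambda>p. slope_energy e' k (fst p) (snd p))"
proof -
  have nz: "U k (fst p) (snd p) \<noteq> 0" if "p \<in> {-a..a} \<times> {0<..}" for p
    using U_pos[of "fst p" "snd p" k] that by (auto simp: mem_Times_iff)
  show "continuous_on ({-a..a} \<times> {0<..}) (\<lambda>p. curvature_energy e \<gamma> k (fst p) (snd p))"
    unfolding curvature_energy_def power_curvature_def
    by (intro continuous_intros U_cont U1_cont U2_cont) (use nz in auto)
  show "continuous_on ({-a..a} \<times> {0<..}) (\<lambda>p. slope_energy e' k (fst p) (snd p))"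
    unfolding slope_energy_def by (intro continuous_intros U_cont U1_cont) (use nz in auto)
qed

lemma energy_eq_deriv_form:
  assumes x: "x \<in> {-a<..<a}" and t: "0 < t"
  shows "curvature_energy e \<gamma> k x t = U k x t powr e * (deriv (\<lambda>y. deriv (\<lambda>z. U k z t powr \<gamma>) y) x)\<^sup>2"
    and "slope_energy e' k x t = U k x t powr e' * (deriv (\<lambda>y. U k y t) x) ^ 4"
  using deriv_power_curvature[of "-a" a "\<lambda>y. U k y t" "\<lambda>y. U1 k y t" "\<lambda>y. U2 k y t", OF
        U_pos[OF _ t] U_dx[OF _ t] U1_dx[OF _ t] x]
  by (simp_all add: curvature_energy_def slope_energy_def)

lemma ae_slice_energy_bounded:
  assumes T: "0 < T" and c: "0 \<le> c" "0 \<le> c'"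
    and b1: "\<And>k. QT_nn_integral a T
               (\<lambda>x t. U k x t powr e * (deriv (\<lambda>y. deriv (\<lambda>z. U k z t powr \<gamma>) y) x)\<^sup>2) \<le> ennreal c"
    and b2: "\<And>k. QT_nn_integral a T (\<lambda>x t. U k x t powr e' * (deriv (\<lambda>y. U k y t) x) ^ 4) \<le> ennreal c'"
  shows "AE t in lborel. t \<in> {0<..<T} \<longrightarrow> (\<exists>K\<ge>0. \<exists>\<^sub>F k in sequentially.
           (\<integral>\<^sup>+ x. ennreal (indicator {-a<..<a} x *
              (curvature_energy e \<gamma> k x t + slope_energy e' k x t)) \<partial>lborel) \<le> ennreal K)"
proof -
  define QT where "QT = {-a<..<a} \<times> {0<..<T}"
  define E where "E k x t = curvature_energy e \<gamma> k x t + slope_energy e' k x t" for k x t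
  define H where "H k p = ennreal (indicator QT p * E k (fst p) (snd p))" for k p
  have sub: "QT \<subseteq> {-a..a} \<times> {0<..}" unfolding QT_def by auto
  note cont = continuous_on_subset[OF energy_continuous(1) sub] continuous_on_subset[OF energy_continuous(2) sub]
  have "(\<integral>\<^sup>+ p. H k p \<partial>(lborel \<Otimes>\<^sub>M lborel)) \<le> ennreal (c + c')" for k
  proof -
    have "(\<integral>\<^sup>+ p. H k p \<partial>(lborel \<Otimes>\<^sub>M lborel)) =
        QT_nn_integral a T (\<lambda>x t. curvature_energy e \<gamma> k x t + slope_energy e' k x t)"
      unfolding H_def QT_def E_def QT_nn_integral_product ..
    also have "\<dots> = QT_nn_integral a T (curvature_energy e \<gamma> k) + QT_nn_integral a T (slope_energy e' k)"
      by (rule QT_nn_integral_add) (use cont energy_nonneg in \<open>auto simp: QT_def\<close>)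
    also have "\<dots> \<le> ennreal c + ennreal c'"
    proof (intro add_mono)
      have "QT_nn_integral a T (curvature_energy e \<gamma> k) =
          QT_nn_integral a T (\<lambda>x t. U k x t powr e * (deriv (\<lambda>y. deriv (\<lambda>z. U k z t powr \<gamma>) y) x)\<^sup>2)"
        by (rule QT_nn_integral_cong) (simp add: energy_eq_deriv_form)
      then show "QT_nn_integral a T (curvature_energy e \<gamma> k) \<le> ennreal c" using b1[of k] by simp
      have "QT_nn_integral a T (slope_energy e' k) =
          QT_nn_integral a T (\<lambda>x t. U k x t powr e' * (deriv (\<lambda>y. U k y t) x) ^ 4)"
        by (rule QT_nn_integral_cong) (simp add: energy_eq_deriv_form)
      then show "QT_nn_integral a T (slope_energy e' k) \<le> ennreal c'" using b2[of k] by simp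
    qed
    finally show ?thesis using c by (simp add: ennreal_plus)
  qed
  moreover have "H k \<in> borel_measurable (lborel \<Otimes>\<^sub>M lborel)" for k
    unfolding H_def QT_def E_def by (intro QT_integrand_measurable continuous_intros) (use cont in \<open>auto simp: QT_def\<close>)
  ultimately have "AE t in lborel. \<exists>K\<ge>0. \<exists>\<^sub>F k in sequentially. (\<integral>\<^sup>+ x. H k (x, t) \<partial>lborel) \<le> ennreal K"
    by (intro ae_frequently_bounded_slices)
  then show ?thesis
  proof eventually_elim
    case (elim t)
    show ?case
    proof
      assume "t \<in> {0<..<T}"
      then have "H k (x, t) = ennreal (indicator {-a<..<a} x * E k x t)" for k x
        by (simp add: H_def QT_def indicator_def)
      then show "\<exists>K\<ge>0. \<exists>\<^sub>F k in sequentially. (\<integral>\<^sup>+ x. ennreal (indicator {-a<..<a} x *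
              (curvature_energy e \<gamma> k x t + slope_energy e' k x t)) \<partial>lborel) \<le> ennreal K"
        using elim by (simp add: E_def)
    qed
  qed
qed


lemma slice_uniform_limit:
  assumes t: "0 < t"
  shows "uniform_limit {-a..a} (\<lambda>k x. U k x t) (\<lambda>x. u x t) sequentially"
  unfolding uniform_limit_iff
proof (intro allI impI)
  fix e :: real assume "0 < e"
  then have "\<forall>\<^sub>F k in sequentially. \<forall>p\<in>{-a..a} \<times> {0..t}. dist (U k (fst p) (snd p)) (u (fst p) (snd p)) < e"
    using U_conv[OF t] unfolding uniform_limit_iff by blast
  then show "\<forall>\<^sub>F k in sequentially. \<forall>x\<in>{-a..a}. dist (U k x t) (u x t) < e"
    by eventually_elim (use t in force)
qed

lemma slice_eventually_bounded:
  assumes t: "0 < t"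
  obtains B where "\<forall>\<^sub>F k in sequentially. \<forall>x\<in>{-a..a}. U k x t \<le> B"
proof -
  have "continuous_on {-a..a} (\<lambda>x. u x t)"
    by (rule uniform_limit_theorem[OF _ slice_uniform_limit[OF t]])
       (use continuous_slice[OF U_cont t] in auto)
  then have "bounded ((\<lambda>x. u x t) ` {-a..a})"
    by (intro compact_imp_bounded compact_continuous_image compact_Icc)
  then obtain B where "\<forall>y\<in>(\<lambda>x. u x t) ` {-a..a}. norm y \<le> B" unfolding bounded_iff by blast
  then have B: "\<And>x. x \<in> {-a..a} \<Longrightarrow> u x t \<le> B" by (force simp: abs_le_iff)
  have "\<forall>\<^sub>F k in sequentially. \<forall>x\<in>{-a..a}. dist (U k x t) (u x t) < 1"
    using slice_uniform_limit[OF t] unfolding uniform_limit_iff by simp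
  then have "\<forall>\<^sub>F k in sequentially. \<forall>x\<in>{-a..a}. U k x t \<le> B + 1"
  proof eventually_elim
    case (elim k)
    show ?case
    proof
      fix x assume x: "x \<in> {-a..a}"
      then have "\<bar>U k x t - u x t\<bar> < 1" using elim by (simp add: dist_real_def)
      then show "U k x t \<le> B + 1" using B[OF x] by linarith
    qed
  qed
  then show ?thesis by (rule that)
qed

lemma slice_power_uniform_limit:
  assumes t: "0 < t" and \<gamma>: "0 < \<gamma>" "\<gamma> \<le> 1"
  shows "uniform_limit {-a..a} (\<lambda>k x. U k x t powr \<gamma>) (\<lambda>x. u x t powr \<gamma>) sequentially"
  unfolding uniform_limit_iff
proof (intro allI impI)
  fix e :: real assume e: "0 < e"
  have "\<forall>\<^sub>F k in sequentially. \<forall>x\<in>{-a..a}. dist (U k x t) (u x t) < e powr (1/\<gamma>)"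
    using slice_uniform_limit[OF t] e unfolding uniform_limit_iff by simp
  then show "\<forall>\<^sub>F k in sequentially. \<forall>x\<in>{-a..a}. dist (U k x t powr \<gamma>) (u x t powr \<gamma>) < e"
  proof eventually_elim
    case (elim k)
    show ?case
    proof
      fix x assume x: "x \<in> {-a..a}"
      have "\<bar>U k x t powr \<gamma> - u x t powr \<gamma>\<bar> \<le> \<bar>U k x t - u x t\<bar> powr \<gamma>"
        using less_imp_le[OF U_pos[OF x t]] u_nonneg[OF x t] \<gamma> by (intro powr_diff_le) auto
      also have "\<dots> < (e powr (1/\<gamma>)) powr \<gamma>"
        using elim x \<gamma> by (intro powr_less_mono2) (auto simp: dist_real_def)
      also have "\<dots> = e" using \<gamma> e by (simp add: powr_powr)
      finally show "dist (U k x t powr \<gamma>) (u x t powr \<gamma>) < e" by (simp add: dist_real_def)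
    qed
  qed
qed

lemma slice_weighted_profile:
  assumes t: "0 < t" and \<gamma>: "0 < \<gamma>0" "\<gamma>0 < \<gamma>" "\<gamma> \<le> 1"
    and e: "e = 3*\<gamma>0 - 2*\<gamma>" "e' = 3*\<gamma>0 - 4" and K: "0 \<le> K"
    and E: "(\<integral>\<^sup>+ x. ennreal (indicator {-a<..<a} x *
              (curvature_energy e \<gamma> k x t + slope_energy e' k x t)) \<partial>lborel) \<le> ennreal K"
  shows "weighted_profile (-a) a (\<gamma>0/\<gamma>) K (\<lambda>x. U k x t powr \<gamma>)
           (power_slope \<gamma> (\<lambda>y. U k y t) (\<lambda>y. U1 k y t))
           (power_curvature \<gamma> (\<lambda>y. U k y t) (\<lambda>y. U1 k y t) (\<lambda>y. U2 k y t))"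
proof -
  define r where "r = \<gamma>0/\<gamma>"
  have r: "\<gamma> * r = \<gamma>0" using \<gamma> by (simp add: r_def)
  have nz: "\<forall>x\<in>{-a..a}. U k x t \<noteq> 0" using U_pos t by (metis less_irrefl)
  note slices = continuous_slice[OF U_cont t] continuous_slice[OF U1_cont t] continuous_slice[OF U2_cont t]
  note derivs = power_has_derivatives[where v="\<lambda>y. U k y t" and v'="\<lambda>y. U1 k y t" and v''="\<lambda>y. U2 k y t",
      OF U_pos[OF _ t] U_dx[OF _ t] U1_dx[OF _ t]]
  show ?thesis
    unfolding weighted_profile_def r_def[symmetric]
  proof (intro conjI ballI allI impI)
    show "continuous_on {-a..a} (power_curvature \<gamma> (\<lambda>y. U k y t) (\<lambda>y. U1 k y t) (\<lambda>y. U2 k y t))"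
      unfolding power_curvature_def by (intro continuous_intros slices) (use nz in auto)
    fix x y assume xy: "-a \<le> x" "x \<le> y" "y \<le> a"
    show "integral {x..y} (energy_density r (\<lambda>x. U k x t powr \<gamma>) (power_slope \<gamma> (\<lambda>y. U k y t) (\<lambda>y. U1 k y t))
            (power_curvature \<gamma> (\<lambda>y. U k y t) (\<lambda>y. U1 k y t) (\<lambda>y. U2 k y t))) \<le> K"
    proof (rule interval_integral_le_nn_integral[OF _ _ _ E K xy])
      show "continuous_on {-a..a} (energy_density r (\<lambda>x. U k x t powr \<gamma>) (power_slope \<gamma> (\<lambda>y. U k y t) (\<lambda>y. U1 k y t))
              (power_curvature \<gamma> (\<lambda>y. U k y t) (\<lambda>y. U1 k y t) (\<lambda>y. U2 k y t)))"
        unfolding energy_density_def power_slope_def power_curvature_def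
        by (intro continuous_intros slices) (use nz in auto)
    next
      fix s assume "s \<in> {-a<..<a}"
      then have "0 < U k s t" using U_pos[OF _ t] by auto
      then show "energy_density r (\<lambda>x. U k x t powr \<gamma>) (power_slope \<gamma> (\<lambda>y. U k y t) (\<lambda>y. U1 k y t))
          (power_curvature \<gamma> (\<lambda>y. U k y t) (\<lambda>y. U1 k y t) (\<lambda>y. U2 k y t)) s
          \<le> curvature_energy e \<gamma> k s t + slope_energy e' k s t"
        unfolding energy_density_def power_slope_def curvature_energy_def slope_energy_def e
        using power_energy_density_le[OF _ _ \<gamma>(3) r] \<gamma> by simp
    qed (simp add: energy_density_def zero_le_even_power)
  qed (use derivs nz in auto)
qed


(* One time slice: if at time t > 0 infinitely many slices have energy at most K, then along
   that subsequence the powers U k^\<gamma> form weighted profiles converging uniformly to u^\<gamma>, which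
   is therefore C^1 on [-a,a]. *)
lemma slice_power_C1:
  assumes t: "0 < t" and \<gamma>: "0 < \<gamma>0" "\<gamma>0 < \<gamma>" "\<gamma> \<le> 1"
    and e: "e = 3*\<gamma>0 - 2*\<gamma>" "e' = 3*\<gamma>0 - 4"
    and bounded: "\<exists>K\<ge>0. \<exists>\<^sub>F k in sequentially. (\<integral>\<^sup>+ x. ennreal (indicator {-a<..<a} x *
                   (curvature_energy e \<gamma> k x t + slope_energy e' k x t)) \<partial>lborel) \<le> ennreal K"
  shows "C1_on_interval (-a) a (\<lambda>x. u x t powr \<gamma>)"
proof -
  obtain K where K: "0 \<le> K" and freq: "\<exists>\<^sub>F k in sequentially. (\<integral>\<^sup>+ x. ennreal (indicator {-a<..<a} x *
      (curvature_energy e \<gamma> k x t + slope_energy e' k x t)) \<partial>lborel) \<le> ennreal K"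
    using bounded by blast
  obtain B where B0: "\<forall>\<^sub>F k in sequentially. \<forall>x\<in>{-a..a}. U k x t \<le> B"
    using slice_eventually_bounded[OF t] .
  obtain s :: "nat \<Rightarrow> nat" where s: "strict_mono s"
    and sj: "\<forall>j. (\<integral>\<^sup>+ x. ennreal (indicator {-a<..<a} x *
              (curvature_energy e \<gamma> (s j) x t + slope_energy e' (s j) x t)) \<partial>lborel) \<le> ennreal K
            \<and> (\<forall>x\<in>{-a..a}. U (s j) x t \<le> B)"
    using frequently_subsequence[OF frequently_eventually_frequently[OF freq B0]] by blast
  have E: "\<And>j. (\<integral>\<^sup>+ x. ennreal (indicator {-a<..<a} x *
              (curvature_energy e \<gamma> (s j) x t + slope_energy e' (s j) x t)) \<partial>lborel) \<le> ennreal K"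
    and B: "\<And>j x. x \<in> {-a..a} \<Longrightarrow> U (s j) x t \<le> B" using sj by auto
  have r: "0 < \<gamma>0/\<gamma>" "\<gamma>0/\<gamma> < 1" using \<gamma> by auto
  show ?thesis
  proof (rule profiles_limit_C1[OF _ r])
    show "-a < a" using a_pos by simp
    show "\<And>j. weighted_profile (-a) a (\<gamma>0/\<gamma>) K (\<lambda>x. U (s j) x t powr \<gamma>)
           (power_slope \<gamma> (\<lambda>y. U (s j) y t) (\<lambda>y. U1 (s j) y t))
           (power_curvature \<gamma> (\<lambda>y. U (s j) y t) (\<lambda>y. U1 (s j) y t) (\<lambda>y. U2 (s j) y t))"
      by (rule slice_weighted_profile[OF t \<gamma> e K E])
    show "\<And>j. power_slope \<gamma> (\<lambda>y. U (s j) y t) (\<lambda>y. U1 (s j) y t) (-a) = 0"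
      by (simp add: power_slope_def U1_left[OF t])
    show "\<And>j x. x \<in> {-a..a} \<Longrightarrow> U (s j) x t powr \<gamma> \<le> B powr \<gamma>"
      using B U_pos[OF _ t] \<gamma> by (intro powr_mono2) (auto intro: less_imp_le)
    show "uniform_limit {-a..a} (\<lambda>j x. U (s j) x t powr \<gamma>) (\<lambda>x. u x t powr \<gamma>) sequentially"
      using filterlim_compose[OF slice_power_uniform_limit[OF t _ \<gamma>(3)] filterlim_subseq[OF s]] \<gamma>
      by (simp add: o_def)
  qed
qed

lemma ae_power_C1_until:
  assumes \<gamma>0: "0 < (1 + n + \<alpha>) / 3" "(1 + n + \<alpha>) / 3 < 1" and \<eta>: "0 < \<eta>" and T: "0 < T"
    and bounds: "\<exists>c1 c2 \<delta>. 0 < c1 \<and> 0 < c2 \<and> 0 < \<delta> \<and>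
        (\<forall>\<gamma>. (1 + n + \<alpha>) / 3 \<le> \<gamma> \<and> \<gamma> \<le> (1 + n + \<alpha>) / 3 + \<delta> \<longrightarrow>
          (\<forall>k. QT_nn_integral a T (\<lambda>x t. U k x t powr (\<alpha> + n - 2 * \<gamma> + 1) *
                  (deriv (\<lambda>y. deriv (\<lambda>z. U k z t powr \<gamma>) y) x)\<^sup>2) \<le> ennreal c1 \<and>
               QT_nn_integral a T (\<lambda>x t. U k x t powr (\<alpha> + n - 3) *
                  (deriv (\<lambda>y. U k y t) x) ^ 4) \<le> ennreal c2))"
  shows "AE t in lborel. t \<in> {0<..<T} \<longrightarrow> (\<exists>\<gamma>. (1 + n + \<alpha>) / 3 < \<gamma> \<and> \<gamma> \<le> (1 + n + \<alpha>) / 3 + \<eta> \<and>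
           C1_on_interval (-a) a (\<lambda>x. u x t powr \<gamma>))"
proof -
  let ?\<gamma>0 = "(1 + n + \<alpha>) / 3"
  obtain c1 c2 \<delta> where c: "0 < c1" "0 < c2" "0 < \<delta>" and b: "\<forall>\<gamma>. ?\<gamma>0 \<le> \<gamma> \<and> \<gamma> \<le> ?\<gamma>0 + \<delta> \<longrightarrow>
        (\<forall>k. QT_nn_integral a T (\<lambda>x t. U k x t powr (\<alpha> + n - 2 * \<gamma> + 1) *
                (deriv (\<lambda>y. deriv (\<lambda>z. U k z t powr \<gamma>) y) x)\<^sup>2) \<le> ennreal c1 \<and>
             QT_nn_integral a T (\<lambda>x t. U k x t powr (\<alpha> + n - 3) *
                (deriv (\<lambda>y. U k y t) x) ^ 4) \<le> ennreal c2)"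
    using bounds by blast
  define m where "m = min \<delta> (min \<eta> ((1 - ?\<gamma>0) / 2))"
  have m: "0 < m" "m \<le> \<delta>" "m \<le> \<eta>" "m \<le> (1 - ?\<gamma>0) / 2"
    unfolding m_def using c \<eta> \<gamma>0 by (auto simp del: le_divide_eq_numeral1)
  define \<gamma> where "\<gamma> = ?\<gamma>0 + m"
  have \<gamma>: "?\<gamma>0 < \<gamma>" "\<gamma> \<le> ?\<gamma>0 + \<eta>" "\<gamma> \<le> 1" "\<gamma> \<le> ?\<gamma>0 + \<delta>"
    using m \<gamma>0 unfolding \<gamma>_def by auto
  have "AE t in lborel. t \<in> {0<..<T} \<longrightarrow> (\<exists>K\<ge>0. \<exists>\<^sub>F k in sequentially.
          (\<integral>\<^sup>+ x. ennreal (indicator {-a<..<a} x * (curvature_energy (\<alpha> + n - 2 * \<gamma> + 1) \<gamma> k x t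
             + slope_energy (\<alpha> + n - 3) k x t)) \<partial>lborel) \<le> ennreal K)"
    using b[rule_format, of \<gamma>] \<gamma> c T by (intro ae_slice_energy_bounded[where c = c1 and c' = c2]) auto
  then show ?thesis
  proof eventually_elim
    case (elim t)
    show ?case
      using slice_power_C1[OF _ \<gamma>0(1) \<gamma>(1) \<gamma>(3), of t "\<alpha> + n - 2 * \<gamma> + 1" "\<alpha> + n - 3"] elim \<gamma>
      by (auto simp: algebra_simps)
  qed
qed

(* The same for all t > 0: intersect the full-measure sets for the horizons T = N + 1. *)
lemma ae_power_C1:
  assumes \<gamma>0: "0 < (1 + n + \<alpha>) / 3" "(1 + n + \<alpha>) / 3 < 1" and \<eta>: "0 < \<eta>"
    and bounds: "\<forall>T>0. \<exists>c1 c2 \<delta>. 0 < c1 \<and> 0 < c2 \<and> 0 < \<delta> \<and>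
        (\<forall>\<gamma>. (1 + n + \<alpha>) / 3 \<le> \<gamma> \<and> \<gamma> \<le> (1 + n + \<alpha>) / 3 + \<delta> \<longrightarrow>
          (\<forall>k. QT_nn_integral a T (\<lambda>x t. U k x t powr (\<alpha> + n - 2 * \<gamma> + 1) *
                  (deriv (\<lambda>y. deriv (\<lambda>z. U k z t powr \<gamma>) y) x)\<^sup>2) \<le> ennreal c1 \<and>
               QT_nn_integral a T (\<lambda>x t. U k x t powr (\<alpha> + n - 3) *
                  (deriv (\<lambda>y. U k y t) x) ^ 4) \<le> ennreal c2))"
  shows "AE t in lborel. 0 < t \<longrightarrow> (\<exists>\<gamma>. (1 + n + \<alpha>) / 3 < \<gamma> \<and> \<gamma> \<le> (1 + n + \<alpha>) / 3 + \<eta> \<and>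
           C1_on_interval (-a) a (\<lambda>x. u x t powr \<gamma>))"
proof -
  let ?P = "\<lambda>t. \<exists>\<gamma>. (1 + n + \<alpha>) / 3 < \<gamma> \<and> \<gamma> \<le> (1 + n + \<alpha>) / 3 + \<eta> \<and>
             C1_on_interval (-a) a (\<lambda>x. u x t powr \<gamma>)"
  have "AE t in lborel. t \<in> {0<..<real N + 1} \<longrightarrow> ?P t" for N :: nat
    by (rule ae_power_C1_until[OF \<gamma>0 \<eta>]) (use bounds in auto)
  then have "AE t in lborel. \<forall>N :: nat. t \<in> {0<..<real N + 1} \<longrightarrow> ?P t"
    unfolding AE_all_countable by blast
  then show ?thesis
  proof eventually_elim
    case (elim t)
    show ?case
    proof
      assume t: "0 < t"
      then have "real (nat \<lceil>t\<rceil>) = of_int \<lceil>t\<rceil>" by simp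
      then have "t < real (nat \<lceil>t\<rceil>) + 1" using le_of_int_ceiling[of t] by linarith
      then have "t \<in> {0<..<real (nat \<lceil>t\<rceil>) + 1}" using t by simp
      then show "?P t" using elim by blast
    qed
  qed
qed

(* Choosing \<alpha>\<^sub>j \<in> \<Psi> with \<alpha>\<^sub>j \<rightarrow> inf \<Psi> and \<gamma>\<^sub>j \<rightarrow> (1+n+inf \<Psi>)/3 in ae_power_C1: for almost every
   t > 0, u(\<cdot>,t)^(1/\<beta>) is C^1 whenever 1/\<beta> > (1+n+inf \<Psi>)/3. *)
lemma ae_root_C1:
  assumes n: "0 < n" and \<Psi>: "\<Psi> \<noteq> {}" "\<Psi> \<subseteq> {1/2 - n <..< 2 - n}"
    and bounds: "\<forall>\<alpha>\<in>\<Psi>. \<forall>T>0. \<exists>c1 c2 \<delta>. 0 < c1 \<and> 0 < c2 \<and> 0 < \<delta> \<and>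
        (\<forall>\<gamma>. (1 + n + \<alpha>) / 3 \<le> \<gamma> \<and> \<gamma> \<le> (1 + n + \<alpha>) / 3 + \<delta> \<longrightarrow>
          (\<forall>k. QT_nn_integral a T (\<lambda>x t. U k x t powr (\<alpha> + n - 2 * \<gamma> + 1) *
                  (deriv (\<lambda>y. deriv (\<lambda>z. U k z t powr \<gamma>) y) x)\<^sup>2) \<le> ennreal c1 \<and>
               QT_nn_integral a T (\<lambda>x t. U k x t powr (\<alpha> + n - 3) *
                  (deriv (\<lambda>y. U k y t) x) ^ 4) \<le> ennreal c2))"
  shows "AE t in lborel. 0 < t \<longrightarrow>
           (\<forall>\<beta>. 0 < \<beta> \<and> \<beta> < 3 / (n + Inf \<Psi> + 1) \<longrightarrow> C1_on_interval (-a) a (\<lambda>x. u x t powr (1 / \<beta>)))"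
proof -
  have bdd: "bdd_below \<Psi>" using \<Psi>(2) by (auto intro!: bdd_belowI[of _ "1/2 - n"])
  have "\<exists>\<alpha>\<in>\<Psi>. \<alpha> < Inf \<Psi> + 1 / real (Suc j)" for j
    using cInf_less_iff[OF \<Psi>(1) bdd, of "Inf \<Psi> + 1 / real (Suc j)"] by simp
  then obtain \<alpha> where \<alpha>: "\<And>j. \<alpha> j \<in> \<Psi>" "\<And>j. \<alpha> j < Inf \<Psi> + 1 / real (Suc j)" by metis
  have \<alpha>_range: "1/2 - n < \<alpha> j" "\<alpha> j < 2 - n" for j using \<alpha>(1)[of j] \<Psi>(2) by auto
  have Inf: "1/2 - n \<le> Inf \<Psi>" using \<Psi> by (intro cInf_greatest) auto
  have g_pos: "0 < (1 + n + \<alpha> j) / 3" for j using \<alpha>_range[of j] n by (simp add: field_simps)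
  have g_rate: "(1 + n + \<alpha> j) / 3 < (1 + n + Inf \<Psi>) / 3 + 1 / real (Suc j)" for j
  proof -
    define h where "h = 1 / real (Suc j)"
    have "0 < h" by (simp add: h_def)
    then show ?thesis using \<alpha>(2)[of j] unfolding h_def[symmetric] by argo
  qed
  have "AE t in lborel. 0 < t \<longrightarrow> (\<exists>\<gamma>. (1 + n + \<alpha> j) / 3 < \<gamma> \<and>
          \<gamma> \<le> (1 + n + \<alpha> j) / 3 + 1 / real (Suc j) \<and> C1_on_interval (-a) a (\<lambda>x. u x t powr \<gamma>))" for j
  proof (rule ae_power_C1[OF g_pos])
    show "(1 + n + \<alpha> j) / 3 < 1" using \<alpha>_range[of j] by (simp add: field_simps)
  qed (use bounds \<alpha>(1) in auto)
  then have "AE t in lborel. \<forall>j. 0 < t \<longrightarrow> (\<exists>\<gamma>. (1 + n + \<alpha> j) / 3 < \<gamma> \<and>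
          \<gamma> \<le> (1 + n + \<alpha> j) / 3 + 1 / real (Suc j) \<and> C1_on_interval (-a) a (\<lambda>x. u x t powr \<gamma>))"
    unfolding AE_all_countable by blast
  then show ?thesis
  proof eventually_elim
    case (elim t)
    show ?case
    proof (intro impI allI)
      fix \<beta> assume t: "0 < t" and \<beta>: "0 < \<beta> \<and> \<beta> < 3 / (n + Inf \<Psi> + 1)"
      then have q: "(1 + n + Inf \<Psi>) / 3 < 1 / \<beta>" using Inf n by (simp add: field_simps)
      show "C1_on_interval (-a) a (\<lambda>x. u x t powr (1 / \<beta>))"
        by (rule C1_power_above_limit[where g = "\<lambda>j. (1 + n + \<alpha> j) / 3", OF _ _ g_pos g_rate q])
           (use elim t u_nonneg in auto)
    qed
  qed
qed

end

lemma classical_solutions_approximating_family: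
  assumes a: "0 < a"
    and U_sol: "\<forall>k. classical_sol_eps a n \<nu> A m M (eps k) (v0 k) (U k)"
    and u_nonneg: "\<forall>x\<in>{-a..a}. \<forall>t\<ge>0. 0 \<le> u x t"
    and U_conv: "\<forall>T>0. uniform_limit ({-a..a} \<times> {0..T})
                   (\<lambda>k p. U k (fst p) (snd p)) (\<lambda>p. u (fst p) (snd p)) sequentially"
  shows "\<exists>U1 U2. approximating_family a U U1 U2 u"
proof -
  define D where "D k u1 u2 \<longleftrightarrow>
      continuous_on ({-a..a} \<times> {0<..}) (\<lambda>p. u1 (fst p) (snd p)) \<and>
      continuous_on ({-a..a} \<times> {0<..}) (\<lambda>p. u2 (fst p) (snd p)) \<and>
      (\<forall>x\<in>{-a..a}. \<forall>t>0. ((\<lambda>y. U k y t) has_real_derivative u1 x t) (at x within {-a..a}) \<and>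
                         ((\<lambda>y. u1 y t) has_real_derivative u2 x t) (at x within {-a..a})) \<and>
      (\<forall>t>0. u1 (-a) t = 0)" for k u1 u2
  have "\<forall>k. \<exists>p. D k (fst p) (snd p)"
  proof
    fix k
    obtain u1 u2 u3 u4 ut where "D k u1 u2"
      using U_sol[rule_format, of k] unfolding classical_sol_eps_def D_def by blast
    then show "\<exists>p. D k (fst p) (snd p)" by (intro exI[of _ "(u1, u2)"]) simp
  qed
  then obtain P where P: "\<And>k. D k (fst (P k)) (snd (P k))" by metis
  have "approximating_family a U (\<lambda>k. fst (P k)) (\<lambda>k. snd (P k)) u"
  proof
    fix k
    have "continuous_on ({-a..a} \<times> {0..}) (\<lambda>p. U k (fst p) (snd p))"
      using U_sol unfolding classical_sol_eps_def by blast
    then show "continuous_on ({-a..a} \<times> {0<..}) (\<lambda>p. U k (fst p) (snd p))"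
      by (rule continuous_on_subset) auto
  qed (use a P U_sol u_nonneg U_conv in \<open>auto simp: D_def classical_sol_eps_def\<close>)
  then show ?thesis by blast
qed

theorem corollary3p4:
  fixes a n \<nu> A m M \<theta> :: real
    and u0 :: "real \<Rightarrow> real" and u0e :: "real \<Rightarrow> real \<Rightarrow> real"
    and eps :: "nat \<Rightarrow> real" and U :: "nat \<Rightarrow> real \<Rightarrow> real \<Rightarrow> real"
    and u :: "real \<Rightarrow> real \<Rightarrow> real" and \<Psi> :: "real set"
  assumes a_pos: "0 < a" and n_pos: "0 < n" and nu: "\<nu> = 1 \<or> \<nu> = -1"
    and A_nonneg: "0 \<le> A" and mM: "m < M" and theta: "0 < \<theta>"
    and u0_H1: "in_H1 a u0" and u0_cont: "continuous_on {-a..a} u0"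
    and u0_nonneg: "\<forall>x\<in>{-a..a}. 0 \<le> u0 x" and u0_nonzero: "\<exists>x\<in>{-a..a}. u0 x \<noteq> 0"
    and u0e: "\<forall>\<epsilon>>0. smooth_fun (u0e \<epsilon>) \<and>
                (\<forall>x\<in>{-a..a}. 0 < u0e \<epsilon> x \<and> u0 x + \<epsilon> powr \<theta> \<le> u0e \<epsilon> x)"
    and u0e_conv: "H1_conv a u0e u0"
    and eps_pos: "\<forall>k. 0 < eps k" and eps_lim: "eps \<longlonglongrightarrow> 0"
    and U_sol: "\<forall>k. classical_sol_eps a n \<nu> A m M (eps k) (u0e (eps k)) (U k)"
    and u_weak: "weak_sol a n \<nu> A m M u0 u"
    and U_conv: "\<forall>T>0. uniform_limit ({-a..a} \<times> {0..T})
                   (\<lambda>k p. U k (fst p) (snd p)) (\<lambda>p. u (fst p) (snd p)) sequentially"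
    and Psi_ne: "\<Psi> \<noteq> {}" and Psi_sub: "\<Psi> \<subseteq> {1/2 - n <..< 2 - n}"
    and bounds: "\<forall>\<alpha>\<in>\<Psi>. \<forall>T>0. \<exists>c1 c2 \<delta>. 0 < c1 \<and> 0 < c2 \<and> 0 < \<delta> \<and>
        (\<forall>\<gamma>. (1 + n + \<alpha>) / 3 \<le> \<gamma> \<and> \<gamma> \<le> (1 + n + \<alpha>) / 3 + \<delta> \<longrightarrow>
          (\<forall>k. QT_nn_integral a T (\<lambda>x t. U k x t powr (\<alpha> + n - 2 * \<gamma> + 1) *
                  (deriv (\<lambda>y. deriv (\<lambda>z. U k z t powr \<gamma>) y) x)\<^sup>2) \<le> ennreal c1 \<and>
               QT_nn_integral a T (\<lambda>x t. U k x t powr (\<alpha> + n - 3) *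
                  (deriv (\<lambda>y. U k y t) x) ^ 4) \<le> ennreal c2))"
  shows "AE t in lborel. 0 < t \<longrightarrow>
           (\<forall>\<beta>. 0 < \<beta> \<and> \<beta> < 3 / (n + Inf \<Psi> + 1) \<longrightarrow>
              C1_on_interval (-a) a (\<lambda>x. u x t powr (1 / \<beta>)))"
proof -
  have "\<forall>x\<in>{-a..a}. \<forall>t\<ge>0. 0 \<le> u x t" using u_weak unfolding weak_sol_def by blast
  then obtain U1 U2 where "approximating_family a U U1 U2 u"
    using classical_solutions_approximating_family[OF a_pos U_sol _ U_conv] by blast
  then interpret approximating_family a U U1 U2 u .
  show ?thesis by (rule ae_root_C1[OF n_pos Psi_ne Psi_sub bounds])
qed

end
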